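(* Let $A$ be a finite dimensional triangular algebra over a field $k$ with respect to the complete set of primitive orthogonal idempotents $e_1,\dots,e_n$, and let $P_j=e_jA$. Let $1\le i\le j\le n$. Then in the homotopy category $\mathcal{K}^b(A)$ of bounded complexes of finite dimensional right $A$-modules, $$R_i^A(P_j)\cong\begin{cases}0&\text{if }j=i,\\ P_j&\text{if }j>i.\end{cases}$$
   Context: $A$ is triangular if $e_iAe_j=0$ for all $j<i$ and $e_iAe_i\cong k$ for all $i$. $R_i^A=-\otimes_A C_i$, where $C_i$ is the complex of $A$-$A$-bimodules $Ae_i\otimes_k e_iA\xrightarrow{m}A$ with $A$ in degree $0$, $Ae_i\otimes_k e_iA$ in degree $-1$, and $m$ the multiplication map. *)

theory Defs
  imports Complex_Main "HOL-Library.Function_Algebras"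
begin

text \<open>A k-algebra structure on a ring 'a is given by a scalar multiplication
  smult making 'a a k-vector space, compatible with the ring multiplication.\<close>

definition fd_algebra :: "('k::field \<Rightarrow> 'a::ring_1 \<Rightarrow> 'a) \<Rightarrow> bool" where
  "fd_algebra smult \<longleftrightarrow>
     vector_space smult \<and>
     (\<forall>c a b. smult c (a * b) = smult c a * b \<and> smult c (a * b) = a * smult c b) \<and>
     (\<exists>B. finite B \<and> module.span smult B = UNIV)"

definition idem :: "'a::ring_1 \<Rightarrow> bool" where
  "idem u \<longleftrightarrow> u * u = u"

definition primitive_idem :: "'a::ring_1 \<Rightarrow> bool" where
  "primitive_idem u \<longleftrightarrow> u \<noteq> 0 \<and> idem u \<and>
     \<not> (\<exists>v w. idem v \<and> idem w \<and> v \<noteq> 0 \<and> w \<noteq> 0 \<and> v * w = 0 \<and> w * v = 0 \<and> u = v + w)"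

definition complete_prim_orth_idems :: "(nat \<Rightarrow> 'a::ring_1) \<Rightarrow> nat \<Rightarrow> bool" where
  "complete_prim_orth_idems e n \<longleftrightarrow>
     (\<forall>i\<in>{1..n}. primitive_idem (e i)) \<and>
     (\<forall>i\<in>{1..n}. \<forall>j\<in>{1..n}. i \<noteq> j \<longrightarrow> e i * e j = 0) \<and>
     (\<Sum>i=1..n. e i) = 1"

definition corner_iso_field :: "('k::field \<Rightarrow> 'a::ring_1 \<Rightarrow> 'a) \<Rightarrow> 'a \<Rightarrow> bool" where
  "corner_iso_field smult u \<longleftrightarrow>
     (\<exists>\<phi> :: 'k \<Rightarrow> 'a. bij_betw \<phi> UNIV {u * a * u | a. True} \<and>
        (\<forall>c d. \<phi> (c + d) = \<phi> c + \<phi> d) \<and>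
        (\<forall>c d. \<phi> (c * d) = \<phi> c * \<phi> d) \<and>
        (\<forall>c d. \<phi> (c * d) = smult c (\<phi> d)) \<and>
        \<phi> 1 = u)"

definition triangular :: "('k::field \<Rightarrow> 'a::ring_1 \<Rightarrow> 'a) \<Rightarrow> (nat \<Rightarrow> 'a) \<Rightarrow> nat \<Rightarrow> bool" where
  "triangular smult e n \<longleftrightarrow>
     (\<forall>i\<in>{1..n}. \<forall>j\<in>{1..n}. j < i \<longrightarrow> (\<forall>a. e i * a * e j = 0)) \<and>
     (\<forall>i\<in>{1..n}. corner_iso_field smult (e i))"

record ('m, 'a) rmod =
  carr :: "'m set"
  zer :: 'm
  add :: "'m \<Rightarrow> 'm \<Rightarrow> 'm"
  ract :: "'m \<Rightarrow> 'a \<Rightarrow> 'm"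

record ('m, 'a) bimod = "('m, 'a) rmod" +
  lact :: "'a \<Rightarrow> 'm \<Rightarrow> 'm"

definition rhom :: "('m, 'a, 'x) rmod_scheme \<Rightarrow> ('n, 'a, 'y) rmod_scheme \<Rightarrow> ('m \<Rightarrow> 'n) \<Rightarrow> bool" where
  "rhom M N f \<longleftrightarrow>
     (\<forall>x\<in>carr M. f x \<in> carr N) \<and>
     (\<forall>x\<in>carr M. \<forall>y\<in>carr M. f (add M x y) = add N (f x) (f y)) \<and>
     (\<forall>x\<in>carr M. \<forall>a. f (ract M x a) = ract N (f x) a)"

definition delta :: "'m \<Rightarrow> 'n \<Rightarrow> ('m \<times> 'n \<Rightarrow> int)" where
  "delta x y = (\<lambda>z. if z = (x, y) then 1 else 0)"

definition tens_rels ::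
  "'m set \<Rightarrow> ('m \<Rightarrow> 'm \<Rightarrow> 'm) \<Rightarrow> ('m \<Rightarrow> 'r \<Rightarrow> 'm) \<Rightarrow>
   'n set \<Rightarrow> ('n \<Rightarrow> 'n \<Rightarrow> 'n) \<Rightarrow> ('r \<Rightarrow> 'n \<Rightarrow> 'n) \<Rightarrow> ('m \<times> 'n \<Rightarrow> int) set" where
  "tens_rels MC addM ra NC addN la =
     {delta (addM x x') y - delta x y - delta x' y | x x' y. x \<in> MC \<and> x' \<in> MC \<and> y \<in> NC} \<union>
     {delta x (addN y y') - delta x y - delta x y' | x y y'. x \<in> MC \<and> y \<in> NC \<and> y' \<in> NC} \<union>
     {delta (ra x r) y - delta x (la r y) | x y r. x \<in> MC \<and> y \<in> NC}"

inductive_set zspan :: "('b::ab_group_add) set \<Rightarrow> 'b set" for R where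
  zspan_zero: "0 \<in> zspan R"
| zspan_add: "g \<in> zspan R \<Longrightarrow> r \<in> R \<Longrightarrow> g + r \<in> zspan R"
| zspan_diff: "g \<in> zspan R \<Longrightarrow> r \<in> R \<Longrightarrow> g - r \<in> zspan R"

text \<open>The free abelian group on MC \<times> NC, as finitely supported integer functions.\<close>
definition free_ab :: "'m set \<Rightarrow> 'n set \<Rightarrow> ('m \<times> 'n \<Rightarrow> int) set" where
  "free_ab MC NC = {f. finite {z. f z \<noteq> 0} \<and> {z. f z \<noteq> 0} \<subseteq> MC \<times> NC}"

definition coset :: "('b::ab_group_add) set \<Rightarrow> 'b \<Rightarrow> 'b set" where
  "coset Z f = (\<lambda>s. f + s) ` Z"

definition setadd :: "('b::ab_group_add) set \<Rightarrow> 'b set \<Rightarrow> 'b set" where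
  "setadd X Y = {x + y | x y. x \<in> X \<and> y \<in> Y}"

definition pushf :: "('u \<Rightarrow> 'v) \<Rightarrow> ('u \<Rightarrow> int) \<Rightarrow> ('v \<Rightarrow> int)" where
  "pushf \<phi> f = (\<lambda>w. \<Sum>z\<in>{z. f z \<noteq> 0 \<and> \<phi> z = w}. f z)"

text \<open>Map on quotient classes induced by a map on generators; Z' is the target relation subgroup.\<close>
definition tmap :: "('v \<Rightarrow> int) set \<Rightarrow> ('u \<Rightarrow> 'v) \<Rightarrow> ('u \<Rightarrow> int) set \<Rightarrow> ('v \<Rightarrow> int) set" where
  "tmap Z' \<phi> X = {pushf \<phi> f + s | f s. f \<in> X \<and> s \<in> Z'}"

definition rel_A :: "('p, 'a, 'x) rmod_scheme \<Rightarrow> ('b, 'a) bimod \<Rightarrow> ('p \<times> 'b \<Rightarrow> int) set" where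
  "rel_A P B = zspan (tens_rels (carr P) (add P) (ract P) (carr B) (add B) (lact B))"

definition tens_A :: "('p, 'a, 'x) rmod_scheme \<Rightarrow> ('b, 'a) bimod \<Rightarrow> (('p \<times> 'b \<Rightarrow> int) set, 'a) rmod" where
  "tens_A P B =
     \<lparr> carr = coset (rel_A P B) ` free_ab (carr P) (carr B),
       zer = rel_A P B,
       add = setadd,
       ract = (\<lambda>X a. tmap (rel_A P B) (\<lambda>(p, b). (p, ract B b a)) X) \<rparr>"

text \<open>A complex (cohomological grading) is a family of modules X n with differentials
  d n : X n \<rightarrow> X (n+1).  Maps between complexes are families of module maps.\<close>

definition chain_map ::
  "(int \<Rightarrow> ('m, 'a, 'x) rmod_scheme) \<Rightarrow> (int \<Rightarrow> 'm \<Rightarrow> 'm) \<Rightarrow>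
   (int \<Rightarrow> ('n, 'a, 'y) rmod_scheme) \<Rightarrow> (int \<Rightarrow> 'n \<Rightarrow> 'n) \<Rightarrow> (int \<Rightarrow> 'm \<Rightarrow> 'n) \<Rightarrow> bool" where
  "chain_map X dX Y dY f \<longleftrightarrow>
     (\<forall>n. rhom (X n) (Y n) (f n)) \<and>
     (\<forall>n. \<forall>x\<in>carr (X n). f (n + 1) (dX n x) = dY n (f n x))"

definition homotopic ::
  "(int \<Rightarrow> ('m, 'a, 'x) rmod_scheme) \<Rightarrow> (int \<Rightarrow> 'm \<Rightarrow> 'm) \<Rightarrow>
   (int \<Rightarrow> ('n, 'a, 'y) rmod_scheme) \<Rightarrow> (int \<Rightarrow> 'n \<Rightarrow> 'n) \<Rightarrow>
   (int \<Rightarrow> 'm \<Rightarrow> 'n) \<Rightarrow> (int \<Rightarrow> 'm \<Rightarrow> 'n) \<Rightarrow> bool" where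
  "homotopic X dX Y dY f g \<longleftrightarrow>
     (\<exists>h. (\<forall>n. rhom (X n) (Y (n - 1)) (h n)) \<and>
          (\<forall>n. \<forall>x\<in>carr (X n).
              f n x = add (Y n) (g n x) (add (Y n) (dY (n - 1) (h n x)) (h (n + 1) (dX n x)))))"

definition htpy_equiv ::
  "(int \<Rightarrow> ('m, 'a, 'x) rmod_scheme) \<Rightarrow> (int \<Rightarrow> 'm \<Rightarrow> 'm) \<Rightarrow>
   (int \<Rightarrow> ('n, 'a, 'y) rmod_scheme) \<Rightarrow> (int \<Rightarrow> 'n \<Rightarrow> 'n) \<Rightarrow> bool" where
  "htpy_equiv X dX Y dY \<longleftrightarrow>
     (\<exists>f g. chain_map X dX Y dY f \<and> chain_map Y dY X dX g \<and>
        homotopic X dX X dX (\<lambda>n. g n \<circ> f n) (\<lambda>n x. x) \<and>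
        homotopic Y dY Y dY (\<lambda>n. f n \<circ> g n) (\<lambda>n x. x))"

definition zero_cx :: "int \<Rightarrow> (unit, 'a) rmod" where
  "zero_cx n = \<lparr> carr = {()}, zer = (), add = (\<lambda>_ _. ()), ract = (\<lambda>_ _. ()) \<rparr>"

definition zero_cx_d :: "int \<Rightarrow> unit \<Rightarrow> unit" where
  "zero_cx_d n x = ()"

definition proj_mod :: "'a::ring_1 \<Rightarrow> ('a, 'a) rmod" where
  "proj_mod u = \<lparr> carr = {u * a | a. True}, zer = 0, add = (+), ract = (\<lambda>x a. x * a) \<rparr>"

definition zero_submod :: "('a::ring_1, 'a) rmod" where
  "zero_submod = \<lparr> carr = {0}, zer = 0, add = (+), ract = (\<lambda>x a. x * a) \<rparr>"

definition stalk0 :: "('a::ring_1, 'a) rmod \<Rightarrow> int \<Rightarrow> ('a, 'a) rmod" where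
  "stalk0 M n = (if n = 0 then M else zero_submod)"

definition stalk0_d :: "int \<Rightarrow> 'a::ring_1 \<Rightarrow> 'a" where
  "stalk0_d n x = 0"

text \<open>Ae_i \<otimes>_k e_iA : generators are pairs (x, y) with x \<in> Ae_i, y \<in> e_iA.\<close>
definition rel_k :: "('k::field \<Rightarrow> 'a::ring_1 \<Rightarrow> 'a) \<Rightarrow> 'a \<Rightarrow> ('a \<times> 'a \<Rightarrow> int) set" where
  "rel_k smult u = zspan (tens_rels {a * u | a. True} (+) (\<lambda>x c. x * smult c 1)
                                   {u * a | a. True} (+) (\<lambda>c y. smult c 1 * y))"

definition tens_k_bimod :: "('k::field \<Rightarrow> 'a::ring_1 \<Rightarrow> 'a) \<Rightarrow> 'a \<Rightarrow> (('a \<times> 'a \<Rightarrow> int) set, 'a) bimod" where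
  "tens_k_bimod smult u =
     \<lparr> carr = coset (rel_k smult u) ` free_ab {a * u | a. True} {u * a | a. True},
       zer = rel_k smult u,
       add = setadd,
       ract = (\<lambda>X b. tmap (rel_k smult u) (\<lambda>(x, y). (x, y * b)) X),
       lact = (\<lambda>b X. tmap (rel_k smult u) (\<lambda>(x, y). (b * x, y)) X) \<rparr>"

text \<open>The multiplication map Ae_i \<otimes>_k e_iA \<rightarrow> A, x \<otimes> y \<mapsto> x y (on a class, via any representative).\<close>
definition msum :: "('a \<times> 'a \<Rightarrow> int) \<Rightarrow> 'a::ring_1" where
  "msum f = (\<Sum>z\<in>{z. f z \<noteq> 0}. of_int (f z) * (fst z * snd z))"

definition mult_map :: "('a \<times> 'a \<Rightarrow> int) set \<Rightarrow> 'a::ring_1" where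
  "mult_map X = (THE v. \<exists>f\<in>X. v = msum f)"

type_synonym 'a cterm = "('a \<times> 'a \<Rightarrow> int) set + 'a"

definition Ci_term :: "('k::field \<Rightarrow> 'a::ring_1 \<Rightarrow> 'a) \<Rightarrow> 'a \<Rightarrow> int \<Rightarrow> ('a cterm, 'a) bimod" where
  "Ci_term smult u n =
     (if n = -1 then
        \<lparr> carr = Inl ` carr (tens_k_bimod smult u),
          zer = Inl (zer (tens_k_bimod smult u)),
          add = (\<lambda>x y. Inl (add (tens_k_bimod smult u) (projl x) (projl y))),
          ract = (\<lambda>x b. Inl (ract (tens_k_bimod smult u) (projl x) b)),
          lact = (\<lambda>b x. Inl (lact (tens_k_bimod smult u) b (projl x))) \<rparr>
      else if n = 0 then
        \<lparr> carr = range Inr,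
          zer = Inr 0,
          add = (\<lambda>x y. Inr (projr x + projr y)),
          ract = (\<lambda>x b. Inr (projr x * b)),
          lact = (\<lambda>b x. Inr (b * projr x)) \<rparr>
      else
        \<lparr> carr = {Inr 0}, zer = Inr 0, add = (\<lambda>_ _. Inr 0),
          ract = (\<lambda>_ _. Inr 0), lact = (\<lambda>_ _. Inr 0) \<rparr>)"

definition Ci_d :: "('k::field \<Rightarrow> 'a::ring_1 \<Rightarrow> 'a) \<Rightarrow> 'a \<Rightarrow> int \<Rightarrow> 'a cterm \<Rightarrow> 'a cterm" where
  "Ci_d smult u n x = (if n = -1 then Inr (mult_map (projl x)) else zer (Ci_term smult u (n + 1)))"

text \<open>R_i^A(P) = P \<otimes>_A C_i, degreewise, with differential id_P \<otimes> d_{C_i}.\<close>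
definition RiA :: "('k::field \<Rightarrow> 'a::ring_1 \<Rightarrow> 'a) \<Rightarrow> 'a \<Rightarrow> ('p, 'a, 'x) rmod_scheme \<Rightarrow>
                   int \<Rightarrow> (('p \<times> 'a cterm \<Rightarrow> int) set, 'a) rmod" where
  "RiA smult u P n = tens_A P (Ci_term smult u n)"

definition RiA_d :: "('k::field \<Rightarrow> 'a::ring_1 \<Rightarrow> 'a) \<Rightarrow> 'a \<Rightarrow> ('p, 'a, 'x) rmod_scheme \<Rightarrow>
                   int \<Rightarrow> ('p \<times> 'a cterm \<Rightarrow> int) set \<Rightarrow> ('p \<times> 'a cterm \<Rightarrow> int) set" where
  "RiA_d smult u P n X = tmap (rel_A P (Ci_term smult u (n + 1))) (\<lambda>(p, c). (p, Ci_d smult u n c)) X"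

end

theory Submission
  imports Defs
begin

text \<open>
  \<open>R\<^sub>i(P)\<close> is the two-term complex \<open>P \<otimes>\<^sub>A Ae\<^sub>i \<otimes>\<^sub>k e\<^sub>iA \<rightarrow> P \<otimes>\<^sub>A A\<close>, and \<open>P \<otimes>\<^sub>A A \<cong> P\<close> by
  multiplication. For \<open>P = e\<^sub>jA\<close> a generator \<open>p \<otimes> x \<otimes> y\<close> of the degree \<open>-1\<close> term equals
  \<open>px \<otimes> e\<^sub>i \<otimes> y\<close> with \<open>px \<in> e\<^sub>jAe\<^sub>i\<close>. If \<open>j > i\<close> this corner vanishes by triangularity, so
  only \<open>P\<^sub>j\<close> in degree 0 survives. If \<open>j = i\<close>, the scalar \<open>px \<in> e\<^sub>iAe\<^sub>i \<cong> k\<close> passes through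
  \<open>\<otimes>\<^sub>k\<close>, so the degree \<open>-1\<close> term is also \<open>e\<^sub>iA\<close>, the differential is the identity of \<open>e\<^sub>iA\<close>,
  and the complex is contractible.
\<close>

abbreviation right_ideal :: "'a::ring_1 \<Rightarrow> 'a set" where
  "right_ideal w \<equiv> {w * a | a. True}"

abbreviation left_ideal :: "'a::ring_1 \<Rightarrow> 'a set" where
  "left_ideal u \<equiv> {a * u | a. True}"

definition fin_supp :: "('b \<Rightarrow> int) \<Rightarrow> bool" where
  "fin_supp f \<longleftrightarrow> finite {z. f z \<noteq> 0}"

definition wsum :: "('b \<Rightarrow> 'a::ring_1) \<Rightarrow> ('b \<Rightarrow> int) \<Rightarrow> 'a" where
  "wsum w f = (\<Sum>z\<in>{z. f z \<noteq> 0}. of_int (f z) * w z)"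

lemma msum_eq_wsum: "msum f = wsum (\<lambda>z. fst z * snd z) f"
  by (simp add: msum_def wsum_def)

lemma fin_supp_zero [simp]: "fin_supp 0"
  by (simp add: fin_supp_def)

lemma fin_supp_add: "fin_supp f \<Longrightarrow> fin_supp g \<Longrightarrow> fin_supp (f + g)"
  unfolding fin_supp_def by (rule finite_subset[of _ "{z. f z \<noteq> 0} \<union> {z. g z \<noteq> 0}"]) auto

lemma fin_supp_uminus: "fin_supp f \<Longrightarrow> fin_supp (- f)"
  by (simp add: fin_supp_def)

lemma fin_supp_diff: "fin_supp f \<Longrightarrow> fin_supp g \<Longrightarrow> fin_supp (f - g)"
  unfolding fin_supp_def by (rule finite_subset[of _ "{z. f z \<noteq> 0} \<union> {z. g z \<noteq> 0}"]) auto

lemma delta_support: "{z. delta x y z \<noteq> 0} = {(x, y)}"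
  by (auto simp: delta_def)

lemma fin_supp_delta [simp]: "fin_supp (delta x y)"
  by (simp add: fin_supp_def delta_support)

lemma wsum_superset:
  "finite S \<Longrightarrow> {z. f z \<noteq> 0} \<subseteq> S \<Longrightarrow> wsum w f = (\<Sum>z\<in>S. of_int (f z) * w z)"
  unfolding wsum_def by (rule sum.mono_neutral_left) auto

lemma wsum_add:
  assumes "fin_supp f" "fin_supp g"
  shows "wsum w (f + g) = wsum w f + wsum w g"
proof -
  let ?S = "{z. f z \<noteq> 0} \<union> {z. g z \<noteq> 0}"
  have S: "finite ?S"
    using assms by (simp add: fin_supp_def)
  have "wsum w (f + g) = (\<Sum>z\<in>?S. of_int ((f + g) z) * w z)"
    by (rule wsum_superset[OF S]) auto
  also have "\<dots> = (\<Sum>z\<in>?S. of_int (f z) * w z) + (\<Sum>z\<in>?S. of_int (g z) * w z)"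
    by (simp add: sum.distrib distrib_right)
  also have "\<dots> = wsum w f + wsum w g"
    by (simp add: wsum_superset[OF S])
  finally show ?thesis .
qed

lemma wsum_uminus: "wsum w (- f) = - wsum w f"
  by (simp add: wsum_def sum_negf)

lemma wsum_diff: "fin_supp f \<Longrightarrow> fin_supp g \<Longrightarrow> wsum w (f - g) = wsum w f - wsum w g"
  using wsum_add[of f "- g" w] by (simp add: fin_supp_uminus wsum_uminus)

lemma wsum_zero [simp]: "wsum w 0 = 0"
  by (simp add: wsum_def)

lemma wsum_delta [simp]: "wsum w (delta x y) = w (x, y)"
  by (simp add: wsum_def delta_support) (simp add: delta_def)

lemma wsum_mult_right: "wsum (\<lambda>z. w z * a) f = wsum w f * a"
  by (simp add: wsum_def sum_distrib_right mult.assoc)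

lemma wsum_mult_left: "wsum (\<lambda>z. a * w z) f = a * wsum w f"
  unfolding wsum_def sum_distrib_left
  by (rule sum.cong) (auto, metis mult.assoc mult_of_int_commute)

lemma wsum_in_right_ideal:
  assumes "fin_supp f" and "\<And>z. f z \<noteq> 0 \<Longrightarrow> w z \<in> right_ideal v"
  shows "wsum w f \<in> right_ideal v"
proof -
  have "\<exists>a. of_int (f z) * w z = v * a" if "f z \<noteq> 0" for z
  proof -
    from assms(2)[OF that] obtain a where "w z = v * a"
      by blast
    then have "of_int (f z) * w z = v * (of_int (f z) * a)"
      by (simp add: mult_of_int_commute mult.assoc)
    then show ?thesis ..
  qed
  then obtain a where a: "\<And>z. f z \<noteq> 0 \<Longrightarrow> of_int (f z) * w z = v * a z"
    by metis
  have "wsum w f = v * (\<Sum>z\<in>{z. f z \<noteq> 0}. a z)"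
    unfolding wsum_def sum_distrib_left by (rule sum.cong) (simp_all add: a)
  then show ?thesis by blast
qed

lemma zspan_gen: "r \<in> R \<Longrightarrow> r \<in> zspan R"
  by (metis zspan.zspan_add zspan.zspan_zero add_0)

lemma zspan_add_closed:
  assumes "g \<in> zspan R"
  shows "h \<in> zspan R \<Longrightarrow> g + h \<in> zspan R"
proof (induction h rule: zspan.induct)
  case (zspan_add h r)
  then show ?case using zspan.zspan_add[of "g + h" R r] by (simp add: add.assoc)
next
  case (zspan_diff h r)
  then show ?case using zspan.zspan_diff[of "g + h" R r] by (simp add: add_diff_eq)
qed (use assms in simp)

lemma zspan_uminus_closed: "g \<in> zspan R \<Longrightarrow> - g \<in> zspan R"
proof (induction g rule: zspan.induct)
  case (zspan_add g r)
  then show ?case using zspan.zspan_diff[of "- g" R r] by simp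
next
  case (zspan_diff g r)
  then show ?case using zspan.zspan_add[of "- g" R r] by simp
qed (simp add: zspan.zspan_zero)

lemma zspan_diff_closed: "g \<in> zspan R \<Longrightarrow> h \<in> zspan R \<Longrightarrow> g - h \<in> zspan R"
  using zspan_add_closed[of g R "- h"] zspan_uminus_closed[of h R] by simp

lemma zspan_minimal:
  assumes "g \<in> zspan R" "R \<subseteq> S" "0 \<in> S"
    "\<And>g h. g \<in> S \<Longrightarrow> h \<in> S \<Longrightarrow> g + h \<in> S"
    "\<And>g h. g \<in> S \<Longrightarrow> h \<in> S \<Longrightarrow> g - h \<in> S"
  shows "g \<in> S"
  using assms(1) by (induction g rule: zspan.induct) (use assms in auto)

lemma zspan_int_mult_closed:
  fixes g :: "'x \<Rightarrow> int"
  assumes "g \<in> zspan R"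
  shows "(\<lambda>v. k * g v) \<in> zspan R"
proof -
  have nat_mult: "(\<lambda>v. int m * g v) \<in> zspan R" for m
  proof (induction m)
    case 0
    show ?case using zspan.zspan_zero[of R] by (simp add: zero_fun_def)
  next
    case (Suc m)
    have "(\<lambda>v. int (Suc m) * g v) = (\<lambda>v. int m * g v) + g"
      by (auto simp: algebra_simps)
    then show ?case using zspan_add_closed[OF Suc assms] by simp
  qed
  show ?thesis
  proof (cases "k \<ge> 0")
    case True
    then show ?thesis using nat_mult[of "nat k"] by simp
  next
    case False
    then have "(\<lambda>v. k * g v) = - (\<lambda>v. int (nat (- k)) * g v)"
      by (simp add: fun_eq_iff)
    then show ?thesis using zspan_uminus_closed[OF nat_mult] by metis
  qed
qed

lemma fin_supp_zspan:
  assumes "R \<subseteq> Collect fin_supp" "g \<in> zspan R"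
  shows "fin_supp g"
  using zspan_minimal[OF assms(2), of "Collect fin_supp"] assms(1)
  by (auto intro: fin_supp_add fin_supp_diff)

lemma wsum_zspan:
  assumes "\<And>r. r \<in> R \<Longrightarrow> fin_supp r \<and> wsum w r = 0" "g \<in> zspan R"
  shows "wsum w g = 0"
  using zspan_minimal[OF assms(2), of "{g. fin_supp g \<and> wsum w g = 0}"] assms(1)
  by (auto simp: wsum_add wsum_diff intro: fin_supp_add fin_supp_diff)

text \<open>
  Every identity between tensors below is proved modulo the relation subgroup by checking it on
  generators for maps that are additive modulo the relations.
\<close>

definition additive_mod :: "'y set \<Rightarrow> 'x::plus set \<Rightarrow> ('x \<Rightarrow> 'y::ab_group_add) \<Rightarrow> bool" where
  "additive_mod Z S \<Theta> \<longleftrightarrow> (\<forall>g\<in>S. \<forall>h\<in>S. \<Theta> (g + h) - \<Theta> g - \<Theta> h \<in> Z)"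

lemma additive_modI:
  "(\<And>g h. g \<in> S \<Longrightarrow> h \<in> S \<Longrightarrow> \<Theta> (g + h) - \<Theta> g - \<Theta> h \<in> Z) \<Longrightarrow> additive_mod Z S \<Theta>"
  by (simp add: additive_mod_def)

lemma additive_mod_id: "additive_mod (zspan R) S (\<lambda>x. x)"
  by (simp add: additive_mod_def zspan.zspan_zero)

lemma additive_mod_diff:
  assumes "additive_mod (zspan R) S \<Theta>" "additive_mod (zspan R) S \<Psi>"
  shows "additive_mod (zspan R) S (\<lambda>x. \<Theta> x - \<Psi> x)"
proof (rule additive_modI)
  fix g h assume "g \<in> S" "h \<in> S"
  then have "(\<Theta> (g + h) - \<Theta> g - \<Theta> h) - (\<Psi> (g + h) - \<Psi> g - \<Psi> h) \<in> zspan R"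
    using assms by (auto simp: additive_mod_def intro: zspan_diff_closed)
  then show "(\<Theta> (g + h) - \<Psi> (g + h)) - (\<Theta> g - \<Psi> g) - (\<Theta> h - \<Psi> h) \<in> zspan R"
    by (simp add: algebra_simps)
qed

lemma additive_mod_comp:
  assumes "additive_mod Z S' \<Theta>" "\<And>g. g \<in> S \<Longrightarrow> \<phi> g \<in> S'"
    "\<And>g h. g \<in> S \<Longrightarrow> h \<in> S \<Longrightarrow> \<phi> (g + h) = \<phi> g + \<phi> h"
  shows "additive_mod Z S (\<lambda>x. \<Theta> (\<phi> x))"
  using assms by (simp add: additive_mod_def)

lemma additive_mod_zero:
  fixes \<Theta> :: "'x::monoid_add \<Rightarrow> 'y::ab_group_add"
  assumes "additive_mod (zspan R) S \<Theta>" "0 \<in> S"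
  shows "\<Theta> 0 \<in> zspan R"
proof -
  have "\<Theta> (0 + 0) - \<Theta> 0 - \<Theta> 0 \<in> zspan R"
    using assms unfolding additive_mod_def by blast
  then have "- \<Theta> 0 \<in> zspan R" by simp
  from zspan_uminus_closed[OF this] show ?thesis by simp
qed

lemma zspan_additive_mod:
  assumes "f \<in> zspan D" "additive_mod (zspan R) (zspan D) \<Theta>" "\<And>d. d \<in> D \<Longrightarrow> \<Theta> d \<in> zspan R"
  shows "\<Theta> f \<in> zspan R"
  using assms(1)
proof (induction f rule: zspan.induct)
  case zspan_zero
  show ?case using additive_mod_zero[OF assms(2) zspan.zspan_zero] .
next
  case (zspan_add g d)
  have "\<Theta> (g + d) - \<Theta> g - \<Theta> d \<in> zspan R"
    using assms(2) zspan_add zspan_gen by (auto simp: additive_mod_def)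
  then have "(\<Theta> (g + d) - \<Theta> g - \<Theta> d) + \<Theta> g + \<Theta> d \<in> zspan R"
    using zspan_add assms(3) by (blast intro: zspan_add_closed)
  then show ?case by simp
next
  case (zspan_diff g d)
  have "g - d \<in> zspan D" "d \<in> zspan D"
    using zspan_diff zspan.zspan_diff zspan_gen by blast+
  then have "\<Theta> ((g - d) + d) - \<Theta> (g - d) - \<Theta> d \<in> zspan R"
    using assms(2) unfolding additive_mod_def by blast
  then have "\<Theta> g - \<Theta> d - (\<Theta> ((g - d) + d) - \<Theta> (g - d) - \<Theta> d) \<in> zspan R"
    using zspan_diff assms(3) by (blast intro: zspan_diff_closed)
  then show ?case by simp
qed

lemma free_ab_iff: "f \<in> free_ab MC NC \<longleftrightarrow> fin_supp f \<and> (\<forall>z. f z \<noteq> 0 \<longrightarrow> z \<in> MC \<times> NC)"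
  by (auto simp: free_ab_def fin_supp_def)

lemma fin_supp_free_ab: "f \<in> free_ab MC NC \<Longrightarrow> fin_supp f"
  by (simp add: free_ab_iff)

lemma free_ab_zero [simp]: "0 \<in> free_ab MC NC"
  by (simp add: free_ab_iff)

lemma free_ab_add: "f \<in> free_ab MC NC \<Longrightarrow> g \<in> free_ab MC NC \<Longrightarrow> f + g \<in> free_ab MC NC"
  by (auto simp: free_ab_iff fin_supp_add) (metis add.right_neutral)+

lemma free_ab_diff: "f \<in> free_ab MC NC \<Longrightarrow> g \<in> free_ab MC NC \<Longrightarrow> f - g \<in> free_ab MC NC"
  by (auto simp: free_ab_iff fin_supp_diff) (metis diff_zero)+

lemma free_ab_delta: "x \<in> MC \<Longrightarrow> y \<in> NC \<Longrightarrow> delta x y \<in> free_ab MC NC"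
  by (simp add: free_ab_iff) (simp add: delta_def)

definition deltas :: "'m set \<Rightarrow> 'n set \<Rightarrow> ('m \<times> 'n \<Rightarrow> int) set" where
  "deltas MC NC = {delta x y | x y. x \<in> MC \<and> y \<in> NC}"

lemma zspan_deltas_imp_free_ab: "g \<in> zspan (deltas MC NC) \<Longrightarrow> g \<in> free_ab MC NC"
  by (erule zspan_minimal) (auto simp: deltas_def intro: free_ab_add free_ab_diff free_ab_delta)

lemma free_ab_imp_zspan_deltas:
  fixes f :: "'m \<times> 'n \<Rightarrow> int"
  assumes "f \<in> free_ab MC NC"
  shows "f \<in> zspan (deltas MC NC)"
proof -
  have "f \<in> zspan (deltas MC NC)" if "finite S" "{z. f z \<noteq> 0} \<subseteq> S" "S \<subseteq> MC \<times> NC"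
    for S and f :: "'m \<times> 'n \<Rightarrow> int"
    using that
  proof (induction S arbitrary: f rule: finite_induct)
    case empty
    then have "f = 0" by (auto simp: fun_eq_iff)
    then show ?case using zspan.zspan_zero by metis
  next
    case (insert z S)
    obtain x y where z: "z = (x, y)" by (cases z)
    have "f(z := 0) \<in> zspan (deltas MC NC)"
      using insert by (intro insert.IH) auto
    moreover have "delta x y \<in> zspan (deltas MC NC)"
      using insert.prems z by (intro zspan_gen) (auto simp: deltas_def)
    ultimately have "f(z := 0) + (\<lambda>v. f z * delta x y v) \<in> zspan (deltas MC NC)"
      by (intro zspan_add_closed zspan_int_mult_closed)
    moreover have "f(z := 0) + (\<lambda>v. f z * delta x y v) = f"
      by (auto simp: fun_eq_iff delta_def z)
    ultimately show ?case by simp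
  qed
  from this[of "{z. f z \<noteq> 0}" f] show ?thesis
    using assms by (simp add: free_ab_def)
qed

lemma fin_supp_induct [consumes 1, case_names zero add diff]:
  fixes f :: "'m \<times> 'n \<Rightarrow> int"
  assumes "fin_supp f" "P 0"
    "\<And>g x y. fin_supp g \<Longrightarrow> P g \<Longrightarrow> P (g + delta x y)"
    "\<And>g x y. fin_supp g \<Longrightarrow> P g \<Longrightarrow> P (g - delta x y)"
  shows "P f"
proof -
  have "f \<in> zspan (deltas UNIV UNIV)"
    using assms(1) by (intro free_ab_imp_zspan_deltas) (simp add: free_ab_iff)
  then have "fin_supp f \<and> P f"
    by (rule zspan.induct[where P = "\<lambda>f. fin_supp f \<and> P f"])
      (use assms(2-4) in \<open>auto simp: deltas_def intro: fin_supp_add fin_supp_diff\<close>)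
  then show ?thesis ..
qed

lemma free_ab_additive_mod:
  assumes "f \<in> free_ab MC NC" "additive_mod (zspan R) (free_ab MC NC) \<Theta>"
    "\<And>x y. x \<in> MC \<Longrightarrow> y \<in> NC \<Longrightarrow> \<Theta> (delta x y) \<in> zspan R"
  shows "\<Theta> f \<in> zspan R"
proof (rule zspan_additive_mod[OF free_ab_imp_zspan_deltas[OF assms(1)]])
  show "additive_mod (zspan R) (zspan (deltas MC NC)) \<Theta>"
    using assms(2) zspan_deltas_imp_free_ab unfolding additive_mod_def by blast
qed (use assms(3) in \<open>auto simp: deltas_def\<close>)

lemma free_ab_in_zspanI:
  assumes "f \<in> free_ab MC NC" "\<And>x y. x \<in> MC \<Longrightarrow> y \<in> NC \<Longrightarrow> delta x y \<in> zspan R"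
  shows "f \<in> zspan R"
  using free_ab_additive_mod[OF assms(1) additive_mod_id] assms(2) .

lemma pushf_superset:
  "finite S \<Longrightarrow> {z. f z \<noteq> 0} \<subseteq> S \<Longrightarrow> pushf \<phi> f v = (\<Sum>z\<in>{z\<in>S. \<phi> z = v}. f z)"
  unfolding pushf_def by (rule sum.mono_neutral_left) auto

lemma pushf_zero [simp]: "pushf \<phi> 0 = 0"
  by (simp add: pushf_def fun_eq_iff)

lemma pushf_delta [simp]: "pushf \<phi> (delta x y) = delta (fst (\<phi> (x, y))) (snd (\<phi> (x, y)))"
proof
  fix v
  have "{z. delta x y z \<noteq> 0 \<and> \<phi> z = v} = (if \<phi> (x, y) = v then {(x, y)} else {})"
    by (auto simp: delta_def)
  then show "pushf \<phi> (delta x y) v = delta (fst (\<phi> (x, y))) (snd (\<phi> (x, y))) v"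
    by (auto simp: pushf_def delta_def)
qed

lemma pushf_add:
  assumes "fin_supp f" "fin_supp g"
  shows "pushf \<phi> (f + g) = pushf \<phi> f + pushf \<phi> g"
proof
  fix v
  let ?S = "{z. f z \<noteq> 0} \<union> {z. g z \<noteq> 0}"
  have S: "finite ?S"
    using assms by (simp add: fin_supp_def)
  have "pushf \<phi> (f + g) v = (\<Sum>z\<in>{z\<in>?S. \<phi> z = v}. (f + g) z)"
    by (rule pushf_superset[OF S]) auto
  also have "\<dots> = (\<Sum>z\<in>{z\<in>?S. \<phi> z = v}. f z) + (\<Sum>z\<in>{z\<in>?S. \<phi> z = v}. g z)"
    by (simp add: sum.distrib)
  also have "\<dots> = pushf \<phi> f v + pushf \<phi> g v"
    by (simp add: pushf_superset[OF S])
  finally show "pushf \<phi> (f + g) v = (pushf \<phi> f + pushf \<phi> g) v"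
    by simp
qed

lemma pushf_uminus: "pushf \<phi> (- f) = - pushf \<phi> f"
  by (simp add: pushf_def fun_eq_iff sum_negf)

lemma pushf_diff: "fin_supp f \<Longrightarrow> fin_supp g \<Longrightarrow> pushf \<phi> (f - g) = pushf \<phi> f - pushf \<phi> g"
  using pushf_add[of f "- g" \<phi>] by (simp add: fin_supp_uminus pushf_uminus)

lemma fin_supp_pushf:
  assumes "fin_supp f"
  shows "fin_supp (pushf \<phi> f)"
proof -
  have "{v. pushf \<phi> f v \<noteq> 0} \<subseteq> \<phi> ` {z. f z \<noteq> 0}"
  proof
    fix v assume "v \<in> {v. pushf \<phi> f v \<noteq> 0}"
    then have "pushf \<phi> f v \<noteq> 0" by simp
    then have "{z. f z \<noteq> 0 \<and> \<phi> z = v} \<noteq> {}"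
      unfolding pushf_def by (rule contrapos_nn) (simp only: sum.empty)
    then show "v \<in> \<phi> ` {z. f z \<noteq> 0}" by auto
  qed
  then show ?thesis
    unfolding fin_supp_def by (rule finite_subset) (use assms in \<open>simp add: fin_supp_def\<close>)
qed

lemma wsum_pushf:
  fixes f :: "'m \<times> 'n \<Rightarrow> int" and \<phi> :: "'m \<times> 'n \<Rightarrow> 'p \<times> 'q"
  assumes "fin_supp f"
  shows "wsum w (pushf \<phi> f) = wsum (w \<circ> \<phi>) f"
  using assms
  by (rule fin_supp_induct[where P = "\<lambda>f. wsum w (pushf \<phi> f) = wsum (w \<circ> \<phi>) f"])
    (simp_all add: pushf_add pushf_diff wsum_add wsum_diff fin_supp_pushf)

lemma pushf_comp:
  fixes f :: "'m \<times> 'n \<Rightarrow> int" and \<psi> :: "'m \<times> 'n \<Rightarrow> 'p \<times> 'q" and \<phi> :: "'p \<times> 'q \<Rightarrow> 'r \<times> 's"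
  assumes "fin_supp f"
  shows "pushf \<phi> (pushf \<psi> f) = pushf (\<phi> \<circ> \<psi>) f"
  using assms
  by (rule fin_supp_induct[where P = "\<lambda>f. pushf \<phi> (pushf \<psi> f) = pushf (\<phi> \<circ> \<psi>) f"])
    (simp_all add: pushf_add pushf_diff fin_supp_pushf)

lemma pushf_zspan:
  assumes "g \<in> zspan R" "R \<subseteq> Collect fin_supp" "\<And>r. r \<in> R \<Longrightarrow> pushf \<phi> r \<in> zspan R'"
  shows "pushf \<phi> g \<in> zspan R'"
proof -
  have "g \<in> {g. fin_supp g \<and> pushf \<phi> g \<in> zspan R'}"
    using assms(1)
  proof (rule zspan_minimal)
    show "R \<subseteq> {g. fin_supp g \<and> pushf \<phi> g \<in> zspan R'}"
      using assms(2,3) by auto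
  qed (auto simp: pushf_add pushf_diff zspan.zspan_zero
        intro: fin_supp_add fin_supp_diff zspan_add_closed zspan_diff_closed)
  then show ?thesis by simp
qed

lemma free_ab_pushf:
  assumes "f \<in> free_ab MC NC" "\<And>z. z \<in> MC \<times> NC \<Longrightarrow> \<phi> z \<in> MC' \<times> NC'"
  shows "pushf \<phi> f \<in> free_ab MC' NC'"
proof -
  have "pushf \<phi> f \<in> zspan (deltas MC' NC')"
  proof (rule pushf_zspan[OF free_ab_imp_zspan_deltas[OF assms(1)]])
    fix r assume "r \<in> deltas MC NC"
    then obtain x y where "r = delta x y" "(x, y) \<in> MC \<times> NC"
      by (auto simp: deltas_def)
    then show "pushf \<phi> r \<in> zspan (deltas MC' NC')"
      using assms(2) by (intro zspan_gen) (force simp: deltas_def)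
  qed (auto simp: deltas_def)
  then show ?thesis by (rule zspan_deltas_imp_free_ab)
qed

lemma coset_zero: "coset (zspan R) 0 = zspan R"
  by (simp add: coset_def)

lemma coset_eqI:
  assumes "f - g \<in> zspan R"
  shows "coset (zspan R) f = coset (zspan R) g"
proof -
  have subset: "coset (zspan R) f \<subseteq> coset (zspan R) g" if "f - g \<in> zspan R" for f g
  proof
    fix x assume "x \<in> coset (zspan R) f"
    then obtain s where s: "s \<in> zspan R" "x = f + s"
      by (auto simp: coset_def)
    then have "x = g + ((f - g) + s)"
      by (simp add: algebra_simps)
    then show "x \<in> coset (zspan R) g"
      using zspan_add_closed[OF that s(1)] unfolding coset_def by blast
  qed
  have "g - f \<in> zspan R"
    using zspan_uminus_closed[OF assms] by simp
  then show ?thesis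
    using subset[OF assms] subset by blast
qed

lemma coset_eq_zspan: "f \<in> zspan R \<Longrightarrow> coset (zspan R) f = zspan R"
  using coset_eqI[of f 0 R] by (simp add: coset_zero)

lemma setadd_coset: "setadd (coset (zspan R) f) (coset (zspan R) g) = coset (zspan R) (f + g)"
proof (intro equalityI subsetI)
  fix x assume "x \<in> setadd (coset (zspan R) f) (coset (zspan R) g)"
  then obtain s t where "s \<in> zspan R" "t \<in> zspan R" "x = (f + g) + (s + t)"
    by (auto simp: setadd_def coset_def algebra_simps)
  then show "x \<in> coset (zspan R) (f + g)"
    unfolding coset_def by (blast intro: zspan_add_closed)
next
  fix x assume "x \<in> coset (zspan R) (f + g)"
  then obtain s where "s \<in> zspan R" "x = (f + 0) + (g + s)"
    by (auto simp: coset_def algebra_simps)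
  then show "x \<in> setadd (coset (zspan R) f) (coset (zspan R) g)"
    unfolding setadd_def coset_def by (blast intro: zspan.zspan_zero)
qed

lemma setadd_zspan: "setadd (zspan R) (zspan R) = zspan R"
  using setadd_coset[of R 0 0] by (simp add: coset_zero)

lemma tmap_coset:
  assumes "pushf \<phi> ` zspan R \<subseteq> zspan R'" "R \<subseteq> Collect fin_supp" "fin_supp f"
  shows "tmap (zspan R') \<phi> (coset (zspan R) f) = coset (zspan R') (pushf \<phi> f)"
proof (intro equalityI subsetI)
  fix x assume "x \<in> tmap (zspan R') \<phi> (coset (zspan R) f)"
  then obtain t s where ts: "t \<in> zspan R" "s \<in> zspan R'" "x = pushf \<phi> (f + t) + s"
    by (auto simp: tmap_def coset_def)
  then have "x = pushf \<phi> f + (pushf \<phi> t + s)"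
    using fin_supp_zspan[OF assms(2) ts(1)] assms(3) by (simp add: pushf_add algebra_simps)
  moreover have "pushf \<phi> t + s \<in> zspan R'"
    using assms(1) ts by (auto intro: zspan_add_closed)
  ultimately show "x \<in> coset (zspan R') (pushf \<phi> f)"
    by (auto simp: coset_def)
next
  fix x assume "x \<in> coset (zspan R') (pushf \<phi> f)"
  moreover have "f + 0 \<in> coset (zspan R) f"
    unfolding coset_def by (rule imageI) (rule zspan.zspan_zero)
  ultimately show "x \<in> tmap (zspan R') \<phi> (coset (zspan R) f)"
    unfolding tmap_def coset_def by force
qed

lemma the_wsum_coset:
  assumes "\<And>r. r \<in> R \<Longrightarrow> fin_supp r \<and> wsum w r = 0" "fin_supp f"
  shows "(THE v. \<exists>g\<in>coset (zspan R) f. v = wsum w g) = wsum w f"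
proof (rule the_equality)
  show "\<exists>g\<in>coset (zspan R) f. wsum w f = wsum w g"
    by (rule bexI[of _ "f + 0"]) (auto simp: coset_def intro: zspan.zspan_zero)
next
  fix v assume "\<exists>g\<in>coset (zspan R) f. v = wsum w g"
  then obtain s where s: "s \<in> zspan R" "v = wsum w (f + s)"
    by (auto simp: coset_def)
  have "fin_supp s"
    using fin_supp_zspan[of R s] assms(1) s(1) by blast
  then show "v = wsum w f"
    using s assms(2) wsum_zspan[OF assms(1) s(1)] by (simp add: wsum_add)
qed

lemma fin_supp_tens_rels: "r \<in> tens_rels MC addM ra NC addN la \<Longrightarrow> fin_supp r"
  by (auto simp: tens_rels_def intro!: fin_supp_diff)

lemma pushf_tens_rels:
  assumes "\<And>x. x \<in> MC \<Longrightarrow> \<alpha> x \<in> MC'" "\<And>y. y \<in> NC \<Longrightarrow> \<beta> y \<in> NC'"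
    "\<And>x x'. x \<in> MC \<Longrightarrow> x' \<in> MC \<Longrightarrow> \<alpha> (addM x x') = addM' (\<alpha> x) (\<alpha> x')"
    "\<And>y y'. y \<in> NC \<Longrightarrow> y' \<in> NC \<Longrightarrow> \<beta> (addN y y') = addN' (\<beta> y) (\<beta> y')"
    "\<And>x r. x \<in> MC \<Longrightarrow> \<alpha> (ra x r) = ra' (\<alpha> x) r"
    "\<And>y r. y \<in> NC \<Longrightarrow> \<beta> (la r y) = la' r (\<beta> y)"
    "r \<in> tens_rels MC addM ra NC addN la"
  shows "pushf (\<lambda>(x, y). (\<alpha> x, \<beta> y)) r \<in> tens_rels MC' addM' ra' NC' addN' la'"
proof -
  let ?\<phi> = "\<lambda>(x, y). (\<alpha> x, \<beta> y)"
  from assms(7) consider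
      (add_left) x x' y where "r = delta (addM x x') y - delta x y - delta x' y"
        "x \<in> MC" "x' \<in> MC" "y \<in> NC"
    | (add_right) x y y' where "r = delta x (addN y y') - delta x y - delta x y'"
        "x \<in> MC" "y \<in> NC" "y' \<in> NC"
    | (balanced) x y s where "r = delta (ra x s) y - delta x (la s y)" "x \<in> MC" "y \<in> NC"
    unfolding tens_rels_def by blast
  then show ?thesis
  proof cases
    case add_left
    then have "pushf ?\<phi> r = delta (addM' (\<alpha> x) (\<alpha> x')) (\<beta> y) - delta (\<alpha> x) (\<beta> y) - delta (\<alpha> x') (\<beta> y)"
      by (simp add: pushf_diff fin_supp_diff assms(3))
    then show ?thesis using add_left assms(1,2) unfolding tens_rels_def by blast
  next
    case add_right
    then have "pushf ?\<phi> r = delta (\<alpha> x) (addN' (\<beta> y) (\<beta> y')) - delta (\<alpha> x) (\<beta> y) - delta (\<alpha> x) (\<beta> y')"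
      by (simp add: pushf_diff fin_supp_diff assms(4))
    then show ?thesis using add_right assms(1,2) unfolding tens_rels_def by blast
  next
    case balanced
    then have "pushf ?\<phi> r = delta (ra' (\<alpha> x) s) (\<beta> y) - delta (\<alpha> x) (la' s (\<beta> y))"
      by (simp add: pushf_diff assms(5,6))
    then show ?thesis using balanced assms(1,2) unfolding tens_rels_def by blast
  qed
qed

lemma pushf_zspan_tens_rels:
  assumes "\<And>x. x \<in> MC \<Longrightarrow> \<alpha> x \<in> MC'" "\<And>y. y \<in> NC \<Longrightarrow> \<beta> y \<in> NC'"
    "\<And>x x'. x \<in> MC \<Longrightarrow> x' \<in> MC \<Longrightarrow> \<alpha> (addM x x') = addM' (\<alpha> x) (\<alpha> x')"
    "\<And>y y'. y \<in> NC \<Longrightarrow> y' \<in> NC \<Longrightarrow> \<beta> (addN y y') = addN' (\<beta> y) (\<beta> y')"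
    "\<And>x r. x \<in> MC \<Longrightarrow> \<alpha> (ra x r) = ra' (\<alpha> x) r"
    "\<And>y r. y \<in> NC \<Longrightarrow> \<beta> (la r y) = la' r (\<beta> y)"
  shows "pushf (\<lambda>(x, y). (\<alpha> x, \<beta> y)) ` zspan (tens_rels MC addM ra NC addN la)
           \<subseteq> zspan (tens_rels MC' addM' ra' NC' addN' la')"
proof (rule image_subsetI)
  fix g assume "g \<in> zspan (tens_rels MC addM ra NC addN la)"
  then show "pushf (\<lambda>(x, y). (\<alpha> x, \<beta> y)) g \<in> zspan (tens_rels MC' addM' ra' NC' addN' la')"
  proof (rule pushf_zspan)
    show "tens_rels MC addM ra NC addN la \<subseteq> Collect fin_supp"
      using fin_supp_tens_rels by blast
  next
    fix r assume "r \<in> tens_rels MC addM ra NC addN la"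
    then show "pushf (\<lambda>(x, y). (\<alpha> x, \<beta> y)) r \<in> zspan (tens_rels MC' addM' ra' NC' addN' la')"
      using pushf_tens_rels[of MC \<alpha> MC' NC \<beta> NC' addM addM' addN addN' ra ra' la la'] assms
      by (blast intro: zspan_gen)
  qed
qed

lemma right_ideal_memI: "w * a \<in> right_ideal w"
  by blast

lemma right_ideal_mult: "x \<in> right_ideal w \<Longrightarrow> x * b \<in> right_ideal w"
  by auto (metis mult.assoc)

lemma right_ideal_zero: "(0::'a::ring_1) \<in> right_ideal w"
  by (rule CollectI, rule exI[of _ 0]) simp

lemma right_ideal_uminus: "x \<in> right_ideal w \<Longrightarrow> - x \<in> right_ideal w"
  by auto (metis mult_minus_right)

lemma proj_mod_simps [simp]:
  "carr (proj_mod w) = right_ideal w" "add (proj_mod w) = (+)" "ract (proj_mod w) = (*)"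
  "zer (proj_mod w) = 0"
  by (simp_all add: proj_mod_def)

definition left_hom :: "('c, 'a) bimod \<Rightarrow> ('d, 'a) bimod \<Rightarrow> ('c \<Rightarrow> 'd) \<Rightarrow> bool" where
  "left_hom C C' \<psi> \<longleftrightarrow>
    (\<forall>c\<in>carr C. \<psi> c \<in> carr C') \<and>
    (\<forall>c\<in>carr C. \<forall>c'\<in>carr C. \<psi> (add C c c') = add C' (\<psi> c) (\<psi> c')) \<and>
    (\<forall>c\<in>carr C. \<forall>r. \<psi> (lact C r c) = lact C' r (\<psi> c))"

definition proj_rels :: "'a::ring_1 \<Rightarrow> ('c, 'a) bimod \<Rightarrow> ('a \<times> 'c \<Rightarrow> int) set" where
  "proj_rels w C = tens_rels (right_ideal w) (+) (*) (carr C) (add C) (lact C)"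

lemma rel_A_proj_mod: "rel_A (proj_mod w) C = zspan (proj_rels w C)"
  by (simp add: rel_A_def proj_rels_def)

lemma proj_rels_fin_supp: "proj_rels w C \<subseteq> Collect fin_supp"
  by (auto simp: proj_rels_def intro: fin_supp_tens_rels)

lemma tens_proj_carr:
  "carr (tens_A (proj_mod w) C) = coset (zspan (proj_rels w C)) ` free_ab (right_ideal w) (carr C)"
  by (simp add: tens_A_def rel_A_proj_mod)

lemma tens_proj_add: "add (tens_A (proj_mod w) C) = setadd"
  by (simp add: tens_A_def)

lemma tmap_left_hom:
  assumes "left_hom C C' \<psi>" "fin_supp f"
  shows "tmap (zspan (proj_rels w C')) (\<lambda>(p, c). (p, \<psi> c)) (coset (zspan (proj_rels w C)) f)
       = coset (zspan (proj_rels w C')) (pushf (\<lambda>(p, c). (p, \<psi> c)) f)"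
proof (rule tmap_coset[OF _ proj_rels_fin_supp assms(2)])
  show "pushf (\<lambda>(p, c). (p, \<psi> c)) ` zspan (proj_rels w C) \<subseteq> zspan (proj_rels w C')"
    unfolding proj_rels_def
    by (rule pushf_zspan_tens_rels[where \<alpha> = "\<lambda>x. x"]) (use assms(1) in \<open>simp_all add: left_hom_def\<close>)
qed

lemma free_ab_left_hom:
  assumes "left_hom C C' \<psi>" "f \<in> free_ab (right_ideal w) (carr C)"
  shows "pushf (\<lambda>(p, c). (p, \<psi> c)) f \<in> free_ab (right_ideal w) (carr C')"
  using assms(2) by (rule free_ab_pushf) (use assms(1) in \<open>auto simp: left_hom_def\<close>)

lemma tens_proj_ract:
  assumes "left_hom C C (\<lambda>c. ract C c b)" "fin_supp f"
  shows "ract (tens_A (proj_mod w) C) (coset (zspan (proj_rels w C)) f) b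
       = coset (zspan (proj_rels w C)) (pushf (\<lambda>(p, c). (p, ract C c b)) f)"
  using tmap_left_hom[OF assms] by (simp add: tens_A_def rel_A_proj_mod)

lemma proj_rels_add_left:
  "x \<in> right_ideal w \<Longrightarrow> x' \<in> right_ideal w \<Longrightarrow> y \<in> carr C \<Longrightarrow>
   delta (x + x') y - delta x y - delta x' y \<in> zspan (proj_rels w C)"
  by (rule zspan_gen) (unfold proj_rels_def tens_rels_def, blast)

lemma proj_rels_add_right:
  "x \<in> right_ideal w \<Longrightarrow> y \<in> carr C \<Longrightarrow> y' \<in> carr C \<Longrightarrow>
   delta x (add C y y') - delta x y - delta x y' \<in> zspan (proj_rels w C)"
  by (rule zspan_gen) (unfold proj_rels_def tens_rels_def, blast)

lemma proj_rels_balanced: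
  "x \<in> right_ideal w \<Longrightarrow> y \<in> carr C \<Longrightarrow>
   delta (x * r) y - delta x (lact C r y) \<in> zspan (proj_rels w C)"
  by (rule zspan_gen) (unfold proj_rels_def tens_rels_def, blast)

lemma delta_zer_proj_rels:
  assumes "zer C \<in> carr C" "add C (zer C) (zer C) = zer C" "x \<in> right_ideal w"
  shows "delta x (zer C) \<in> zspan (proj_rels w C)"
  using zspan_uminus_closed[OF proj_rels_add_right[OF assms(3,1,1)]] assms(2) by simp

lemma delta_zero_proj_rels:
  assumes "y \<in> carr C"
  shows "delta 0 y \<in> zspan (proj_rels w C)"
  using zspan_uminus_closed[OF proj_rels_add_left[OF right_ideal_zero right_ideal_zero assms]] by simp

definition zer_neutral :: "('m, 'a, 'x) rmod_scheme \<Rightarrow> bool" where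
  "zer_neutral M \<longleftrightarrow>
     zer M \<in> carr M \<and> (\<forall>x\<in>carr M. add M x (zer M) = x) \<and> (\<forall>a. ract M (zer M) a = zer M)"

lemma zer_neutral_proj_mod: "zer_neutral (proj_mod w)"
  using right_ideal_zero[of w] by (simp add: zer_neutral_def)

lemma rhom_const_zer: "zer_neutral N \<Longrightarrow> rhom M N (\<lambda>_. zer N)"
  by (simp add: rhom_def zer_neutral_def)

lemma htpy_equiv_zero_cxI:
  assumes "\<And>n. zer_neutral (X n)" "\<And>n. d n (zer (X n)) = zer (X (n + 1))"
    and "homotopic X d X d (\<lambda>n _. zer (X n)) (\<lambda>n x. x)"
  shows "htpy_equiv X d (zero_cx :: int \<Rightarrow> (unit, 'a) rmod) zero_cx_d"
proof -
  let ?f = "\<lambda>(n::int) (x::'m). ()" and ?g = "\<lambda>n (_::unit). zer (X n)"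
  have "chain_map X d (zero_cx :: int \<Rightarrow> (unit, 'a) rmod) zero_cx_d ?f"
    by (simp add: chain_map_def rhom_def zero_cx_def zero_cx_d_def)
  moreover have "chain_map (zero_cx :: int \<Rightarrow> (unit, 'a) rmod) zero_cx_d X d ?g"
    by (simp add: chain_map_def rhom_const_zer assms(1,2))
  moreover have "homotopic (zero_cx :: int \<Rightarrow> (unit, 'a) rmod) zero_cx_d zero_cx zero_cx_d
      (\<lambda>n. ?f n \<circ> ?g n) (\<lambda>n x. x)"
    unfolding homotopic_def by (rule exI[of _ "\<lambda>n x. ()"]) (simp add: rhom_def zero_cx_def)
  moreover have "homotopic X d X d (\<lambda>n. ?g n \<circ> ?f n) (\<lambda>n x. x)"
    using assms(3) by (simp add: comp_def)
  ultimately show ?thesis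
    unfolding htpy_equiv_def by blast
qed

locale degree0_complex =
  fixes X :: "int \<Rightarrow> ('m, 'a::ring_1, 'x) rmod_scheme" and d :: "int \<Rightarrow> 'm \<Rightarrow> 'm"
    and M :: "('a, 'a) rmod" and \<phi> :: "'m \<Rightarrow> 'a" and \<psi> :: "'a \<Rightarrow> 'm"
  assumes zer_neutral_X: "zer_neutral (X n)"
    and d_zer: "d n (zer (X n)) = zer (X (n + 1))"
    and d_carr: "x \<in> carr (X n) \<Longrightarrow> d n x \<in> carr (X (n + 1))"
    and concentrated: "n \<noteq> 0 \<Longrightarrow> carr (X n) = {zer (X n)}"
    and zer_neutral_M: "zer_neutral M" and zer_M: "zer M = 0"
    and rhom_\<phi>: "rhom (X 0) M \<phi>" and rhom_\<psi>: "rhom M (X 0) \<psi>"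
    and \<psi>_\<phi>: "x \<in> carr (X 0) \<Longrightarrow> \<psi> (\<phi> x) = x"
    and \<phi>_\<psi>: "y \<in> carr M \<Longrightarrow> \<phi> (\<psi> y) = y"
    and \<psi>_zero: "\<psi> 0 = zer (X 0)"
begin

definition to_stalk :: "int \<Rightarrow> 'm \<Rightarrow> 'a" where
  "to_stalk n = (if n = 0 then \<phi> else (\<lambda>_. 0))"

definition from_stalk :: "int \<Rightarrow> 'a \<Rightarrow> 'm" where
  "from_stalk n = (if n = 0 then \<psi> else (\<lambda>_. zer (X n)))"

lemma M_zero: "0 \<in> carr M" "add M 0 0 = 0" "ract M 0 a = 0" "x \<in> carr M \<Longrightarrow> add M x 0 = x"
  using zer_neutral_M zer_M by (auto simp: zer_neutral_def)

lemma chain_map_to_stalk: "chain_map X d (stalk0 M) stalk0_d to_stalk"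
  unfolding chain_map_def
proof (intro conjI allI ballI)
  fix n show "rhom (X n) (stalk0 M n) (to_stalk n)"
    using rhom_\<phi> by (cases "n = 0") (simp_all add: to_stalk_def stalk0_def rhom_def zero_submod_def)
next
  fix n x assume x: "x \<in> carr (X n)"
  have "\<phi> (d (-1) (zer (X (-1)))) = 0"
    using d_zer[of "-1"] \<phi>_\<psi>[OF M_zero(1)] \<psi>_zero by simp
  then show "to_stalk (n + 1) (d n x) = stalk0_d n (to_stalk n x)"
    using x concentrated[of "-1"] by (cases "n = -1") (auto simp: to_stalk_def stalk0_d_def)
qed

lemma chain_map_from_stalk: "chain_map (stalk0 M) stalk0_d X d from_stalk"
  unfolding chain_map_def
proof (intro conjI allI ballI)
  fix n show "rhom (stalk0 M n) (X n) (from_stalk n)"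
    using rhom_\<psi> rhom_const_zer[OF zer_neutral_X]
    by (cases "n = 0") (simp_all add: from_stalk_def stalk0_def)
next
  fix n y assume y: "y \<in> carr (stalk0 M n)"
  have "d 0 (\<psi> y) = zer (X 1)" if "n = 0"
    using d_carr[of "\<psi> y" 0] concentrated[of 1] rhom_\<psi> y that by (auto simp: rhom_def stalk0_def)
  then show "from_stalk (n + 1) (stalk0_d n y) = d n (from_stalk n y)"
    using d_zer[of n] d_zer[of "-1"] \<psi>_zero y by (auto simp: from_stalk_def stalk0_d_def)
qed

lemma homotopic_from_to_stalk: "homotopic X d X d (\<lambda>n. from_stalk n \<circ> to_stalk n) (\<lambda>n x. x)"
  unfolding homotopic_def
proof (intro exI[of _ "\<lambda>n _. zer (X (n - 1))"] conjI allI ballI rhom_const_zer zer_neutral_X)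
  fix n x assume x: "x \<in> carr (X n)"
  have "add (X n) x (add (X n) (d (n - 1) (zer (X (n - 1)))) (zer (X (n + 1 - 1)))) = x"
    using d_zer[of "n - 1"] zer_neutral_X[of n] x by (simp add: zer_neutral_def)
  moreover have "from_stalk n (to_stalk n x) = x"
    using x concentrated[of n] \<psi>_\<phi> by (auto simp: to_stalk_def from_stalk_def)
  ultimately show "(from_stalk n \<circ> to_stalk n) x
      = add (X n) x (add (X n) (d (n - 1) (zer (X (n - 1)))) (zer (X (n + 1 - 1))))"
    by simp
qed

lemma homotopic_to_from_stalk:
  "homotopic (stalk0 M) stalk0_d (stalk0 M) stalk0_d (\<lambda>n. to_stalk n \<circ> from_stalk n) (\<lambda>n x. x)"
  unfolding homotopic_def
proof (intro exI[of _ "\<lambda>n _. 0"] conjI allI ballI)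
  fix n show "rhom (stalk0 M n) (stalk0 M (n - 1)) (\<lambda>_. 0)"
    using M_zero by (simp add: rhom_def stalk0_def zero_submod_def)
next
  fix n x assume "x \<in> carr (stalk0 M n)"
  then show "(to_stalk n \<circ> from_stalk n) x = add (stalk0 M n) x (add (stalk0 M n) (stalk0_d (n - 1) 0) 0)"
    using \<phi>_\<psi> M_zero
    by (cases "n = 0") (simp_all add: to_stalk_def from_stalk_def stalk0_d_def stalk0_def zero_submod_def)
qed

lemma htpy_equiv_stalk0: "htpy_equiv X d (stalk0 M) stalk0_d"
  unfolding htpy_equiv_def
  using chain_map_to_stalk chain_map_from_stalk homotopic_from_to_stalk homotopic_to_from_stalk by blast

end

lemma wsum_mult_in_right_ideal:
  assumes "f \<in> free_ab (right_ideal w) NC"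
  shows "wsum (\<lambda>(p, c). p * h c) f \<in> right_ideal w"
proof (rule wsum_in_right_ideal)
  show "fin_supp f"
    using assms by (rule fin_supp_free_ab)
  fix z assume "f z \<noteq> 0"
  then have "z \<in> right_ideal w \<times> NC"
    using assms unfolding free_ab_iff by blast
  then obtain a c where "z = (w * a, c)"
    by blast
  then show "(\<lambda>(p, c). p * h c) z \<in> right_ideal w"
    using right_ideal_mult[OF right_ideal_memI, of w a "h c"] by simp
qed

definition eval0 :: "('a::ring_1 \<times> ('b + 'a) \<Rightarrow> int) \<Rightarrow> 'a" where
  "eval0 f = wsum (\<lambda>(p, c). p * projr c) f"

definition eval0_cls :: "('a::ring_1 \<times> ('b + 'a) \<Rightarrow> int) set \<Rightarrow> 'a" where
  "eval0_cls X = (THE v. \<exists>f\<in>X. v = eval0 f)"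

lemma eval0_delta [simp]: "eval0 (delta p c) = p * projr c"
  by (simp add: eval0_def)

lemma eval0_in_right_ideal: "f \<in> free_ab (right_ideal w) NC \<Longrightarrow> eval0 f \<in> right_ideal w"
  unfolding eval0_def by (rule wsum_mult_in_right_ideal)

lemma eval0_add: "fin_supp f \<Longrightarrow> fin_supp g \<Longrightarrow> eval0 (f + g) = eval0 f + eval0 g"
  by (simp add: eval0_def wsum_add)

definition eval1 :: "('a::ring_1 \<times> 'a cterm \<Rightarrow> int) \<Rightarrow> 'a" where
  "eval1 f = wsum (\<lambda>(p, c). p * mult_map (projl c)) f"

lemma eval1_delta [simp]: "eval1 (delta p c) = p * mult_map (projl c)"
  by (simp add: eval1_def)

lemma eval1_in_right_ideal: "f \<in> free_ab (right_ideal w) NC \<Longrightarrow> eval1 f \<in> right_ideal w"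
  unfolding eval1_def by (rule wsum_mult_in_right_ideal)

lemma eval1_add: "fin_supp f \<Longrightarrow> fin_supp g \<Longrightarrow> eval1 (f + g) = eval1 f + eval1 g"
  by (simp add: eval1_def wsum_add)

text \<open>In the locales, \<open>u\<close> stands for \<open>e\<^sub>i\<close> and \<open>w\<close> for \<open>e\<^sub>j\<close>.\<close>

locale Ci_tensor =
  fixes smult :: "'k::field \<Rightarrow> 'a::ring_1 \<Rightarrow> 'a" and u w :: 'a
  assumes idem: "u * u = u"
    and smult_mult: "\<forall>c a b. smult c (a * b) = smult c a * b \<and> smult c (a * b) = a * smult c b"
begin

lemma smult_one_commute: "smult c 1 * y = y * smult c 1"
  using smult_mult by (metis mult_1_left mult_1_right)

definition rels_k :: "('a \<times> 'a \<Rightarrow> int) set" where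
  "rels_k = tens_rels (left_ideal u) (+) (\<lambda>x c. x * smult c 1) (right_ideal u) (+) (\<lambda>c y. smult c 1 * y)"

abbreviation "free_k \<equiv> free_ab (left_ideal u) (right_ideal u)"
abbreviation "cls_k \<equiv> coset (zspan rels_k)"
abbreviation "Ck \<equiv> tens_k_bimod smult u"

lemma rel_k_eq: "rel_k smult u = zspan rels_k"
  by (simp add: rel_k_def rels_k_def)

lemma rels_k_fin_supp: "rels_k \<subseteq> Collect fin_supp"
  by (auto simp: rels_k_def intro: fin_supp_tens_rels)

lemma rels_k_add_right:
  "x \<in> left_ideal u \<Longrightarrow> y \<in> right_ideal u \<Longrightarrow> y' \<in> right_ideal u \<Longrightarrow>
   delta x (y + y') - delta x y - delta x y' \<in> zspan rels_k"
  by (rule zspan_gen) (unfold rels_k_def tens_rels_def, blast)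

lemma rels_k_balanced:
  "x \<in> left_ideal u \<Longrightarrow> y \<in> right_ideal u \<Longrightarrow>
   delta (x * smult c 1) y - delta x (smult c 1 * y) \<in> zspan rels_k"
  by (rule zspan_gen) (unfold rels_k_def tens_rels_def, blast)

lemma left_ideal_mult_idem: "x \<in> left_ideal u \<Longrightarrow> x * u = x"
  using idem by (auto simp: mult.assoc)

lemma idem_mult_right_ideal: "y \<in> right_ideal u \<Longrightarrow> u * y = y"
  using idem by (auto simp: mult.assoc[symmetric])

lemma idem_in_left_ideal: "u \<in> left_ideal u"
  by (rule CollectI, rule exI[of _ u]) (simp add: idem)

lemma idem_in_right_ideal: "u \<in> right_ideal u"
  by (rule CollectI, rule exI[of _ u]) (simp add: idem)

lemma Ck_simps: "carr Ck = cls_k ` free_k" "add Ck = setadd" "zer Ck = zspan rels_k"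
  by (simp_all add: tens_k_bimod_def rel_k_eq)

lemma Ck_lact:
  assumes "fin_supp \<xi>"
  shows "lact Ck r (cls_k \<xi>) = cls_k (pushf (\<lambda>(x, y). (r * x, y)) \<xi>)"
proof -
  have "pushf (\<lambda>(x, y). (r * x, y)) ` zspan rels_k \<subseteq> zspan rels_k"
    unfolding rels_k_def
    by (rule pushf_zspan_tens_rels[where \<alpha> = "\<lambda>x. r * x" and \<beta> = "\<lambda>y. y", simplified])
      (auto simp: distrib_left mult.assoc[symmetric])
  then show ?thesis
    using tmap_coset[OF _ rels_k_fin_supp assms] by (simp add: tens_k_bimod_def rel_k_eq)
qed

lemma Ck_ract:
  assumes "fin_supp \<xi>"
  shows "ract Ck (cls_k \<xi>) b = cls_k (pushf (\<lambda>(x, y). (x, y * b)) \<xi>)"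
proof -
  have "pushf (\<lambda>(x, y). (x, y * b)) ` zspan rels_k \<subseteq> zspan rels_k"
    unfolding rels_k_def
    by (rule pushf_zspan_tens_rels[where \<alpha> = "\<lambda>x. x" and \<beta> = "\<lambda>y. y * b", simplified])
      (auto simp: distrib_right mult.assoc)
  then show ?thesis
    using tmap_coset[OF _ rels_k_fin_supp assms] by (simp add: tens_k_bimod_def rel_k_eq)
qed

lemma free_k_lact: "\<xi> \<in> free_k \<Longrightarrow> pushf (\<lambda>(x, y). (r * x, y)) \<xi> \<in> free_k"
  by (erule free_ab_pushf) (auto simp: mult.assoc[symmetric])

lemma free_k_ract: "\<xi> \<in> free_k \<Longrightarrow> pushf (\<lambda>(x, y). (x, y * b)) \<xi> \<in> free_k"
  by (erule free_ab_pushf) (auto simp: mult.assoc)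

lemma rels_k_in_ker_msum: "r \<in> rels_k \<Longrightarrow> fin_supp r \<and> wsum (\<lambda>z. fst z * snd z) r = 0"
  unfolding rels_k_def tens_rels_def
  by (auto simp: wsum_diff fin_supp_diff distrib_left distrib_right mult.assoc)

lemma mult_map_cls_k: "fin_supp \<xi> \<Longrightarrow> mult_map (cls_k \<xi>) = msum \<xi>"
  unfolding mult_map_def msum_eq_wsum by (rule the_wsum_coset[OF rels_k_in_ker_msum])

lemma msum_pushf_lact: "fin_supp \<xi> \<Longrightarrow> msum (pushf (\<lambda>(x, y). (r * x, y)) \<xi>) = r * msum \<xi>"
  unfolding msum_eq_wsum wsum_pushf wsum_mult_left[symmetric]
  by (simp add: comp_def case_prod_beta mult.assoc)

abbreviation "C n \<equiv> Ci_term smult u n"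

lemma C_m1_simps:
  "carr (C (-1)) = Inl ` carr Ck"
  "add (C (-1)) x y = Inl (setadd (projl x) (projl y))"
  "lact (C (-1)) r x = Inl (lact Ck r (projl x))"
  "ract (C (-1)) x b = Inl (ract Ck (projl x) b)"
  "zer (C (-1)) = Inl (zspan rels_k)"
  by (simp_all add: Ci_term_def Ck_simps)

lemma C_0_simps:
  "carr (C 0) = range Inr"
  "add (C 0) x y = Inr (projr x + projr y)"
  "lact (C 0) r x = Inr (r * projr x)"
  "ract (C 0) x b = Inr (projr x * b)"
  "zer (C 0) = Inr 0"
  by (simp_all add: Ci_term_def)

lemma C_other_simps:
  assumes "n \<noteq> -1" "n \<noteq> 0"
  shows "carr (C n) = {Inr 0}" "add (C n) x y = Inr 0" "lact (C n) r x = Inr 0"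
    "ract (C n) x b = Inr 0" "zer (C n) = Inr 0"
  using assms by (simp_all add: Ci_term_def)

lemma C_m1_elem:
  assumes "c \<in> carr (C (-1))"
  obtains \<xi> where "\<xi> \<in> free_k" "c = Inl (cls_k \<xi>)"
  using assms by (auto simp: C_m1_simps Ck_simps)

lemma C_m1_in: "\<xi> \<in> free_k \<Longrightarrow> Inl (cls_k \<xi>) \<in> carr (C (-1))"
  by (simp add: C_m1_simps Ck_simps)

lemma C_m1_zer: "zer (C (-1)) = Inl (cls_k 0)"
  by (simp add: C_m1_simps coset_zero)

lemma C_m1_add: "add (C (-1)) (Inl (cls_k \<xi>)) (Inl (cls_k \<eta>)) = Inl (cls_k (\<xi> + \<eta>))"
  by (simp add: C_m1_simps setadd_coset)

lemma C_m1_lact: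
  "\<xi> \<in> free_k \<Longrightarrow> lact (C (-1)) r (Inl (cls_k \<xi>)) = Inl (cls_k (pushf (\<lambda>(x, y). (r * x, y)) \<xi>))"
  by (simp add: C_m1_simps Ck_lact fin_supp_free_ab)

lemma C_m1_ract:
  "\<xi> \<in> free_k \<Longrightarrow> ract (C (-1)) (Inl (cls_k \<xi>)) b = Inl (cls_k (pushf (\<lambda>(x, y). (x, y * b)) \<xi>))"
  by (simp add: C_m1_simps Ck_ract fin_supp_free_ab)

lemma C_zer:
  "zer (C n) \<in> carr (C n)" "add (C n) (zer (C n)) (zer (C n)) = zer (C n)"
  "lact (C n) r (zer (C n)) = zer (C n)"
proof -
  have "zer (C n) \<in> carr (C n) \<and> add (C n) (zer (C n)) (zer (C n)) = zer (C n)
      \<and> lact (C n) r (zer (C n)) = zer (C n)"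
    using C_m1_in[OF free_ab_zero] C_m1_add[of 0 0] C_m1_lact[OF free_ab_zero, of r]
    by (cases "n = -1"; cases "n = 0") (simp_all add: C_m1_zer C_0_simps C_other_simps)
  then show "zer (C n) \<in> carr (C n)" "add (C n) (zer (C n)) (zer (C n)) = zer (C n)"
    "lact (C n) r (zer (C n)) = zer (C n)"
    by blast+
qed

lemma left_hom_ract_m1: "left_hom (C (-1)) (C (-1)) (\<lambda>c. ract (C (-1)) c b)"
  unfolding left_hom_def
proof (intro conjI ballI allI)
  fix c assume "c \<in> carr (C (-1))"
  then obtain \<xi> where \<xi>: "\<xi> \<in> free_k" "c = Inl (cls_k \<xi>)" by (rule C_m1_elem)
  show "ract (C (-1)) c b \<in> carr (C (-1))"
    unfolding \<xi>(2) C_m1_ract[OF \<xi>(1)] by (rule C_m1_in[OF free_k_ract[OF \<xi>(1)]])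
  fix r :: 'a
  have "(\<lambda>(x, y). (x, y * b)) \<circ> (\<lambda>(x, y). (r * x, y)) = (\<lambda>(x, y). (r * x, y)) \<circ> (\<lambda>(x, y). (x, y * b))"
    by (auto simp: fun_eq_iff)
  then show "ract (C (-1)) (lact (C (-1)) r c) b = lact (C (-1)) r (ract (C (-1)) c b)"
    unfolding \<xi>(2) C_m1_lact[OF \<xi>(1)] C_m1_ract[OF \<xi>(1)] C_m1_ract[OF free_k_lact[OF \<xi>(1)]]
      C_m1_lact[OF free_k_ract[OF \<xi>(1)]] pushf_comp[OF fin_supp_free_ab[OF \<xi>(1)]]
    by simp
next
  fix c c'
  assume c: "c \<in> carr (C (-1))" and c': "c' \<in> carr (C (-1))"
  obtain \<xi> where \<xi>: "\<xi> \<in> free_k" "c = Inl (cls_k \<xi>)" using c by (rule C_m1_elem)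
  obtain \<eta> where \<eta>: "\<eta> \<in> free_k" "c' = Inl (cls_k \<eta>)" using c' by (rule C_m1_elem)
  show "ract (C (-1)) (add (C (-1)) c c') b = add (C (-1)) (ract (C (-1)) c b) (ract (C (-1)) c' b)"
    unfolding \<xi>(2) \<eta>(2) C_m1_add C_m1_ract[OF \<xi>(1)] C_m1_ract[OF \<eta>(1)]
      C_m1_ract[OF free_ab_add[OF \<xi>(1) \<eta>(1)]]
      pushf_add[OF fin_supp_free_ab[OF \<xi>(1)] fin_supp_free_ab[OF \<eta>(1)]]
    by (rule refl)
qed

lemma left_hom_ract: "left_hom (C n) (C n) (\<lambda>c. ract (C n) c b)"
proof -
  consider "n = -1" | "n = 0" | "n \<noteq> -1" "n \<noteq> 0" by blast
  then show ?thesis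
    by cases
      (use left_hom_ract_m1 in \<open>auto simp: left_hom_def C_0_simps C_other_simps distrib_right mult.assoc\<close>)
qed

lemma left_hom_Ci_d_m1: "left_hom (C (-1)) (C 0) (Ci_d smult u (-1))"
  unfolding left_hom_def
proof (intro conjI ballI allI)
  fix c assume "c \<in> carr (C (-1))"
  show "Ci_d smult u (-1) c \<in> carr (C 0)" by (simp add: Ci_d_def C_0_simps)
next
  fix c c'
  assume c: "c \<in> carr (C (-1))" and c': "c' \<in> carr (C (-1))"
  obtain \<xi> where \<xi>: "\<xi> \<in> free_k" "c = Inl (cls_k \<xi>)" using c by (rule C_m1_elem)
  obtain \<eta> where \<eta>: "\<eta> \<in> free_k" "c' = Inl (cls_k \<eta>)" using c' by (rule C_m1_elem)
  have fin: "fin_supp \<xi>" "fin_supp \<eta>"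
    using \<xi> \<eta> by (simp_all add: fin_supp_free_ab)
  show "Ci_d smult u (-1) (add (C (-1)) c c')
      = add (C 0) (Ci_d smult u (-1) c) (Ci_d smult u (-1) c')"
    unfolding \<xi>(2) \<eta>(2) C_m1_add Ci_d_def C_0_simps
    by (simp add: mult_map_cls_k fin fin_supp_add msum_eq_wsum wsum_add)
next
  fix c r assume "c \<in> carr (C (-1))"
  then obtain \<xi> where \<xi>: "\<xi> \<in> free_k" "c = Inl (cls_k \<xi>)" by (rule C_m1_elem)
  have fin: "fin_supp \<xi>"
    using \<xi> by (simp add: fin_supp_free_ab)
  show "Ci_d smult u (-1) (lact (C (-1)) r c) = lact (C 0) r (Ci_d smult u (-1) c)"
    unfolding \<xi>(2) C_m1_lact[OF \<xi>(1)] Ci_d_def C_0_simps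
    by (simp add: mult_map_cls_k fin fin_supp_pushf msum_pushf_lact)
qed

lemma left_hom_Ci_d: "left_hom (C n) (C (n + 1)) (Ci_d smult u n)"
proof (cases "n = -1")
  case True
  then show ?thesis using left_hom_Ci_d_m1 by simp
next
  case False
  then show ?thesis
    using C_zer[of "n + 1"] by (simp add: left_hom_def Ci_d_def)
qed

abbreviation "P \<equiv> proj_mod w"
abbreviation "T n \<equiv> RiA smult u P n"
abbreviation "dT n \<equiv> RiA_d smult u P n"
abbreviation "Z n \<equiv> zspan (proj_rels w (C n))"
abbreviation "cls n \<equiv> coset (Z n)"
abbreviation "FT n \<equiv> free_ab (right_ideal w) (carr (C n))"
abbreviation "d_gen n \<equiv> (\<lambda>(p, c). (p, Ci_d smult u n c))"

lemma T_carr: "carr (T n) = cls n ` FT n"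
  by (simp add: RiA_def tens_proj_carr)

lemma T_elem:
  assumes "X \<in> carr (T n)"
  obtains f where "f \<in> FT n" "X = cls n f"
  using assms by (auto simp: T_carr)

lemma T_add: "add (T n) = setadd"
  by (simp add: RiA_def tens_proj_add)

lemma T_zer: "zer (T n) = Z n"
  by (simp add: RiA_def tens_A_def rel_A_proj_mod)

lemma T_ract: "fin_supp f \<Longrightarrow> ract (T n) (cls n f) b = cls n (pushf (\<lambda>(p, c). (p, ract (C n) c b)) f)"
  by (simp add: RiA_def tens_proj_ract[OF left_hom_ract])

lemma zer_neutral_T: "zer_neutral (T n)"
  unfolding zer_neutral_def T_zer
proof (intro conjI ballI allI)
  show "Z n \<in> carr (T n)"
    using coset_zero[of "proj_rels w (C n)"] by (auto simp: T_carr)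
next
  fix X assume "X \<in> carr (T n)"
  then show "add (T n) X (Z n) = X"
    using setadd_coset[of "proj_rels w (C n)" _ 0] by (auto simp: T_carr T_add coset_zero)
next
  fix a show "ract (T n) (Z n) a = Z n"
    using T_ract[of 0 n a] by (simp add: coset_zero)
qed

lemma dT_cls: "f \<in> FT n \<Longrightarrow> dT n (cls n f) = cls (n + 1) (pushf (d_gen n) f)"
  unfolding RiA_d_def rel_A_proj_mod by (rule tmap_left_hom[OF left_hom_Ci_d fin_supp_free_ab])

lemma free_ab_d_gen: "f \<in> FT n \<Longrightarrow> pushf (d_gen n) f \<in> FT (n + 1)"
  by (rule free_ab_left_hom[OF left_hom_Ci_d])

lemma dT_zer: "dT n (Z n) = Z (n + 1)"
  using dT_cls[OF free_ab_zero, of n] by (simp add: coset_zero)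

lemma dT_carr:
  assumes "X \<in> carr (T n)"
  shows "dT n X \<in> carr (T (n + 1))"
proof -
  obtain f where f: "f \<in> FT n" "X = cls n f"
    using assms by (rule T_elem)
  show ?thesis
    unfolding T_carr f(2) dT_cls[OF f(1)] by (rule imageI[OF free_ab_d_gen[OF f(1)]])
qed

lemma T_trivialI:
  assumes "\<And>p c. p \<in> right_ideal w \<Longrightarrow> c \<in> carr (C n) \<Longrightarrow> delta p c \<in> Z n"
  shows "carr (T n) = {Z n}"
proof -
  have "f \<in> Z n" if "f \<in> FT n" for f
    using free_ab_in_zspanI[OF that] assms by blast
  then show ?thesis
    by (auto simp: T_carr coset_eq_zspan intro!: image_eqI[of _ _ 0])
qed

lemma T_other:
  assumes "n \<noteq> -1" "n \<noteq> 0"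
  shows "carr (T n) = {Z n}"
proof (rule T_trivialI)
  fix p c assume p: "p \<in> right_ideal w" and c: "c \<in> carr (C n)"
  have "c = zer (C n)"
    using c C_other_simps(1,5)[OF assms] by simp
  then show "delta p c \<in> Z n"
    using delta_zer_proj_rels[OF C_zer(1,2) p] by simp
qed

subsection \<open>Degree 0: \<open>wA \<otimes>\<^sub>A A \<cong> wA\<close>\<close>

abbreviation tensor_one :: "'a \<Rightarrow> 'a \<times> 'a cterm \<Rightarrow> int" where
  "tensor_one p \<equiv> delta p (Inr 1)"

lemma proj_rels_C0_in_ker_eval0: "r \<in> proj_rels w (C 0) \<Longrightarrow> fin_supp r \<and> wsum (\<lambda>(p, c). p * projr c) r = 0"
  unfolding proj_rels_def tens_rels_def
  by (auto simp: wsum_diff fin_supp_diff distrib_left distrib_right mult.assoc C_0_simps)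

lemma eval0_cls_cls: "fin_supp f \<Longrightarrow> eval0_cls (cls 0 f) = eval0 f"
  unfolding eval0_cls_def eval0_def by (rule the_wsum_coset[OF proj_rels_C0_in_ker_eval0])

lemma eval0_pushf_ract: "fin_supp f \<Longrightarrow> eval0 (pushf (\<lambda>(p, c). (p, ract (C 0) c a)) f) = eval0 f * a"
  unfolding eval0_def wsum_pushf wsum_mult_right[symmetric]
  by (simp add: comp_def case_prod_beta C_0_simps mult.assoc)

lemma delta_Inr_tensor_one: "p \<in> right_ideal w \<Longrightarrow> delta p (Inr a) - tensor_one (p * a) \<in> Z 0"
  using zspan_uminus_closed[OF proj_rels_balanced[of p w "Inr 1" "C 0" a]] by (simp add: C_0_simps)

lemma tensor_one_additive_mod: "additive_mod (Z 0) (right_ideal w) tensor_one"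
  by (rule additive_modI, rule proj_rels_add_left) (simp_all add: C_0_simps)

lemma tensor_one_eval0: "f \<in> FT 0 \<Longrightarrow> f - tensor_one (eval0 f) \<in> Z 0"
proof (erule free_ab_additive_mod)
  show "additive_mod (Z 0) (FT 0) (\<lambda>f. f - tensor_one (eval0 f))"
    by (intro additive_mod_diff additive_mod_id additive_mod_comp[OF tensor_one_additive_mod])
      (erule eval0_in_right_ideal, simp add: eval0_add fin_supp_free_ab)
next
  fix p c assume p: "p \<in> right_ideal w" and "c \<in> carr (C 0)"
  then obtain a where "c = Inr a"
    by (auto simp: C_0_simps)
  then show "delta p c - tensor_one (eval0 (delta p c)) \<in> Z 0"
    using delta_Inr_tensor_one[OF p, of a] by simp
qed

lemma tensor_one_zero: "tensor_one 0 \<in> Z 0"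
  using additive_mod_zero[OF tensor_one_additive_mod right_ideal_zero] .

lemma eval0_eq_zero_imp_in_Z:
  assumes "f \<in> FT 0" "eval0 f = 0"
  shows "f \<in> Z 0"
  using zspan_add_closed[OF tensor_one_eval0[OF assms(1)] tensor_one_zero] assms(2) by simp

lemma eval0_cls_in_right_ideal:
  assumes "X \<in> carr (T 0)"
  shows "eval0_cls X \<in> right_ideal w"
proof -
  obtain f where f: "f \<in> FT 0" "X = cls 0 f"
    using assms by (rule T_elem)
  then show ?thesis
    using eval0_in_right_ideal[OF f(1)] by (simp add: eval0_cls_cls fin_supp_free_ab)
qed

lemma eval0_cls_add:
  assumes "X \<in> carr (T 0)" "Y \<in> carr (T 0)"
  shows "eval0_cls (add (T 0) X Y) = eval0_cls X + eval0_cls Y"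
proof -
  obtain f where "f \<in> FT 0" "X = cls 0 f"
    using assms(1) by (rule T_elem)
  moreover obtain g where "g \<in> FT 0" "Y = cls 0 g"
    using assms(2) by (rule T_elem)
  ultimately show ?thesis
    by (simp add: T_add setadd_coset eval0_cls_cls fin_supp_free_ab fin_supp_add eval0_add)
qed

lemma eval0_cls_ract:
  assumes "X \<in> carr (T 0)"
  shows "eval0_cls (ract (T 0) X a) = eval0_cls X * a"
proof -
  obtain f where f: "f \<in> FT 0" "X = cls 0 f"
    using assms by (rule T_elem)
  have "fin_supp f"
    using f(1) by (rule fin_supp_free_ab)
  then show ?thesis
    by (simp add: f(2) T_ract eval0_cls_cls fin_supp_pushf eval0_pushf_ract)
qed

lemma rhom_eval0_cls: "rhom (T 0) P eval0_cls"
  unfolding rhom_def proj_mod_simps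
  by (intro conjI ballI allI eval0_cls_in_right_ideal eval0_cls_add eval0_cls_ract)

lemma tensor_one_in_FT: "p \<in> right_ideal w \<Longrightarrow> tensor_one p \<in> FT 0"
  by (rule free_ab_delta) (simp_all add: C_0_simps)

lemma rhom_cls_tensor_one: "rhom P (T 0) (\<lambda>p. cls 0 (tensor_one p))"
  unfolding rhom_def
proof (intro conjI ballI allI)
  fix p assume "p \<in> carr P"
  then show "cls 0 (tensor_one p) \<in> carr (T 0)"
    unfolding T_carr by (intro imageI tensor_one_in_FT) simp
next
  fix p q assume "p \<in> carr P" "q \<in> carr P"
  then have "tensor_one (p + q) - (tensor_one p + tensor_one q) \<in> Z 0"
    using tensor_one_additive_mod by (simp add: additive_mod_def diff_diff_eq)
  then show "cls 0 (tensor_one (add P p q)) = add (T 0) (cls 0 (tensor_one p)) (cls 0 (tensor_one q))"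
    by (simp add: T_add setadd_coset coset_eqI)
next
  fix p a assume "p \<in> carr P"
  then have "tensor_one (p * a) - delta p (Inr a) \<in> Z 0"
    using zspan_uminus_closed[OF delta_Inr_tensor_one[of p a]] by simp
  then show "cls 0 (tensor_one (ract P p a)) = ract (T 0) (cls 0 (tensor_one p)) a"
    by (simp add: T_ract C_0_simps coset_eqI)
qed

lemma cls_tensor_one_eval0_cls:
  assumes "X \<in> carr (T 0)"
  shows "cls 0 (tensor_one (eval0_cls X)) = X"
proof -
  obtain f where f: "f \<in> FT 0" "X = cls 0 f"
    using assms by (rule T_elem)
  have "tensor_one (eval0 f) - f \<in> Z 0"
    using zspan_uminus_closed[OF tensor_one_eval0[OF f(1)]] by simp
  then show ?thesis
    by (simp add: f(2) eval0_cls_cls fin_supp_free_ab[OF f(1)] coset_eqI)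
qed

lemma eval0_cls_tensor_one: "eval0_cls (cls 0 (tensor_one p)) = p"
  by (simp add: eval0_cls_cls)

subsection \<open>The case \<open>wAu = 0\<close>\<close>

lemma delta_cls_k_additive_mod:
  assumes "p \<in> right_ideal w"
  shows "additive_mod (Z (-1)) free_k (\<lambda>\<xi>. delta p (Inl (cls_k \<xi>)))"
proof (rule additive_modI)
  fix \<xi> \<eta> assume "\<xi> \<in> free_k" "\<eta> \<in> free_k"
  then show "delta p (Inl (cls_k (\<xi> + \<eta>))) - delta p (Inl (cls_k \<xi>)) - delta p (Inl (cls_k \<eta>)) \<in> Z (-1)"
    using proj_rels_add_right[OF assms C_m1_in C_m1_in] by (simp add: C_m1_add)
qed

lemma delta_cls_k_move_left:
  assumes "p \<in> right_ideal w" "x \<in> left_ideal u" "y \<in> right_ideal u"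
  shows "delta p (Inl (cls_k (delta x y))) - delta (p * x) (Inl (cls_k (delta u y))) \<in> Z (-1)"
proof -
  have e: "delta u y \<in> free_k"
    by (rule free_ab_delta[OF idem_in_left_ideal assms(3)])
  have "lact (C (-1)) x (Inl (cls_k (delta u y))) = Inl (cls_k (delta x y))"
    using C_m1_lact[OF e, of x] by (simp add: left_ideal_mult_idem[OF assms(2)])
  then show ?thesis
    using zspan_uminus_closed[OF proj_rels_balanced[OF assms(1) C_m1_in[OF e], of x]] by simp
qed

lemma delta_in_Z_m1_if_orthogonal:
  assumes "\<And>a. w * a * u = 0" and p: "p \<in> right_ideal w" and c: "c \<in> carr (C (-1))"
  shows "delta p c \<in> Z (-1)"
proof -
  obtain \<xi> where \<xi>: "\<xi> \<in> free_k" "c = Inl (cls_k \<xi>)"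
    using c by (rule C_m1_elem)
  have "delta p (Inl (cls_k \<xi>)) \<in> Z (-1)"
    using \<xi>(1) delta_cls_k_additive_mod[OF p]
  proof (rule free_ab_additive_mod)
    fix x y assume x: "x \<in> left_ideal u" and y: "y \<in> right_ideal u"
    have "p * x = 0"
      using p x assms(1) by (auto simp: mult.assoc) (metis mult.assoc)
    then show "delta p (Inl (cls_k (delta x y))) \<in> Z (-1)"
      using zspan_add_closed[OF delta_cls_k_move_left[OF p x y]
          delta_zero_proj_rels[OF C_m1_in[OF free_ab_delta[OF idem_in_left_ideal y]]]]
      by simp
  qed
  then show ?thesis
    using \<xi>(2) by simp
qed

lemma htpy_equiv_stalk0_if_orthogonal:
  assumes "\<And>a. w * a * u = 0"
  shows "htpy_equiv T dT (stalk0 P) stalk0_d"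
proof -
  interpret degree0_complex T dT P eval0_cls "\<lambda>p. cls 0 (tensor_one p)"
  proof
    fix n :: int assume "n \<noteq> 0"
    then show "carr (T n) = {zer (T n)}"
      using T_trivialI[OF delta_in_Z_m1_if_orthogonal[OF assms]] T_other[of n]
      by (cases "n = -1") (simp_all add: T_zer)
  qed (simp_all add: zer_neutral_T T_zer dT_zer dT_carr zer_neutral_proj_mod rhom_eval0_cls
      rhom_cls_tensor_one cls_tensor_one_eval0_cls eval0_cls_tensor_one coset_eq_zspan tensor_one_zero)
  show ?thesis
    by (rule htpy_equiv_stalk0)
qed

end

section \<open>The diagonal case\<close>

locale Ci_tensor_diagonal = Ci_tensor smult u u
  for smult :: "'k::field \<Rightarrow> 'a::ring_1 \<Rightarrow> 'a" and u :: 'a +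
  assumes corner: "corner_iso_field smult u"
begin

lemma corner_eq_smult:
  assumes "z \<in> {u * a * u | a. True}"
  obtains c where "z = smult c 1 * u"
proof -
  obtain \<phi> :: "'k \<Rightarrow> 'a" where "bij_betw \<phi> UNIV {u * a * u | a. True}"
    and "\<forall>c d. \<phi> (c * d) = smult c (\<phi> d)" and "\<phi> 1 = u"
    using corner unfolding corner_iso_field_def by blast
  moreover from this(1) assms obtain c where "z = \<phi> c"
    by (auto simp: bij_betw_def)
  ultimately have "z = smult c u"
    by (metis mult.right_neutral)
  also have "smult c u = smult c 1 * u"
    using smult_mult by (metis mult_1_left)
  finally show ?thesis by (rule that)
qed

abbreviation unit_gen :: "'a \<Rightarrow> 'a \<times> 'a cterm \<Rightarrow> int" where
  "unit_gen v \<equiv> delta u (Inl (cls_k (delta u v)))"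

lemma unit_gen_in_FT: "v \<in> right_ideal u \<Longrightarrow> unit_gen v \<in> FT (-1)"
  by (intro free_ab_delta idem_in_right_ideal C_m1_in idem_in_left_ideal)

lemma unit_gen_additive_mod: "additive_mod (Z (-1)) (right_ideal u) unit_gen"
proof (rule additive_modI)
  fix a b assume a: "a \<in> right_ideal u" and b: "b \<in> right_ideal u"
  have "delta u (a + b) - (delta u a + delta u b) \<in> zspan rels_k"
    using rels_k_add_right[OF idem_in_left_ideal a b] by (simp add: diff_diff_eq)
  then have "Inl (cls_k (delta u (a + b)))
      = add (C (-1)) (Inl (cls_k (delta u a))) (Inl (cls_k (delta u b)))"
    by (simp add: C_m1_add coset_eqI)
  then show "unit_gen (a + b) - unit_gen a - unit_gen b \<in> Z (-1)"
    using proj_rels_add_right[OF idem_in_right_ideal C_m1_in C_m1_in]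
      free_ab_delta[OF idem_in_left_ideal a] free_ab_delta[OF idem_in_left_ideal b]
    by simp
qed

text \<open>The only place where \<open>uAu \<cong> k\<close> is used: it lets a scalar pass through \<open>\<otimes>\<^sub>k\<close>.\<close>

lemma delta_cls_k_unit_gen:
  assumes p: "p \<in> right_ideal u" and x: "x \<in> left_ideal u" and y: "y \<in> right_ideal u"
  shows "delta p (Inl (cls_k (delta x y))) - unit_gen (p * x * y) \<in> Z (-1)"
proof -
  have "p * x \<in> {u * a * u | a. True}"
    using p x by (auto simp: mult.assoc) (metis mult.assoc)
  then obtain c where c: "p * x = smult c 1 * u"
    by (rule corner_eq_smult)
  let ?s = "smult c 1" and ?e = "Inl (cls_k (delta u y)) :: 'a cterm"
  have e: "?e \<in> carr (C (-1))"
    using free_ab_delta[OF idem_in_left_ideal y] by (rule C_m1_in)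
  have "lact (C (-1)) ?s ?e = Inl (cls_k (delta (?s * u) y))"
    using C_m1_lact[OF free_ab_delta[OF idem_in_left_ideal y], of ?s] by simp
  also have "cls_k (delta (?s * u) y) = cls_k (delta u (?s * y))"
    unfolding smult_one_commute[of c u] by (rule coset_eqI[OF rels_k_balanced[OF idem_in_left_ideal y]])
  also have "?s * y = p * x * y"
    using idem_mult_right_ideal[OF y] by (simp add: c mult.assoc)
  finally have "delta (u * ?s) ?e - unit_gen (p * x * y) \<in> Z (-1)"
    using proj_rels_balanced[OF idem_in_right_ideal e, of ?s] by simp
  moreover have "delta p (Inl (cls_k (delta x y))) - delta (u * ?s) ?e \<in> Z (-1)"
    using delta_cls_k_move_left[OF p x y] by (simp add: c smult_one_commute)
  ultimately show ?thesis
    using zspan_add_closed by fastforce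
qed

lemma delta_cls_k_unit_gen_msum:
  assumes p: "p \<in> right_ideal u" and \<xi>: "\<xi> \<in> free_k"
  shows "delta p (Inl (cls_k \<xi>)) - unit_gen (p * msum \<xi>) \<in> Z (-1)"
  using \<xi>
proof (rule free_ab_additive_mod)
  show "additive_mod (Z (-1)) free_k (\<lambda>\<xi>. delta p (Inl (cls_k \<xi>)) - unit_gen (p * msum \<xi>))"
  proof (intro additive_mod_diff delta_cls_k_additive_mod p)
    show "additive_mod (Z (-1)) free_k (\<lambda>\<xi>. unit_gen (p * msum \<xi>))"
      by (rule additive_mod_comp[OF unit_gen_additive_mod right_ideal_mult[OF p]])
        (simp add: msum_eq_wsum wsum_add fin_supp_free_ab distrib_left)
  qed
next
  fix x y assume "x \<in> left_ideal u" "y \<in> right_ideal u"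
  then show "delta p (Inl (cls_k (delta x y))) - unit_gen (p * msum (delta x y)) \<in> Z (-1)"
    using delta_cls_k_unit_gen[OF p] by (simp add: msum_eq_wsum mult.assoc)
qed

lemma unit_gen_eval1: "f \<in> FT (-1) \<Longrightarrow> f - unit_gen (eval1 f) \<in> Z (-1)"
proof (erule free_ab_additive_mod)
  show "additive_mod (Z (-1)) (FT (-1)) (\<lambda>f. f - unit_gen (eval1 f))"
    by (intro additive_mod_diff additive_mod_id additive_mod_comp[OF unit_gen_additive_mod])
      (erule eval1_in_right_ideal, simp add: eval1_add fin_supp_free_ab)
next
  fix p c assume p: "p \<in> right_ideal u" and c: "c \<in> carr (C (-1))"
  obtain \<xi> where \<xi>: "\<xi> \<in> free_k" "c = Inl (cls_k \<xi>)"
    using c by (rule C_m1_elem)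
  then show "delta p c - unit_gen (eval1 (delta p c)) \<in> Z (-1)"
    using delta_cls_k_unit_gen_msum[OF p \<xi>(1)] by (simp add: mult_map_cls_k fin_supp_free_ab)
qed

lemma eval1_eq_zero_imp_in_Z:
  assumes "f \<in> FT (-1)" "eval1 f = 0"
  shows "f \<in> Z (-1)"
  using zspan_add_closed[OF unit_gen_eval1[OF assms(1)]
      additive_mod_zero[OF unit_gen_additive_mod right_ideal_zero]] assms(2)
  by simp

lemma eval1_unit_gen:
  assumes "v \<in> right_ideal u"
  shows "eval1 (unit_gen v) = v"
proof -
  have "eval1 (unit_gen v) = u * (u * v)"
    by (simp add: mult_map_cls_k msum_eq_wsum)
  then show ?thesis
    using idem_mult_right_ideal[OF assms] by simp
qed

lemma eval0_d_gen: "fin_supp f \<Longrightarrow> eval0 (pushf (d_gen (-1)) f) = eval1 f"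
  by (simp add: eval0_def eval1_def wsum_pushf comp_def split_def Ci_d_def)

lemma dT_unit_gen:
  assumes "v \<in> right_ideal u"
  shows "dT (-1) (cls (-1) (unit_gen v)) = cls 0 (delta u (Inr v))"
  using dT_cls[OF unit_gen_in_FT[OF assms]] idem_mult_right_ideal[OF assms]
  by (simp add: Ci_d_def mult_map_cls_k msum_eq_wsum)

text \<open>
  \<open>eval1\<close> and \<open>eval0\<close> identify \<open>T(-1)\<close> and \<open>T 0\<close> with \<open>uA\<close>, turning \<open>dT(-1)\<close> into the identity;
  the contraction is minus its inverse.
\<close>

definition contraction0 :: "('a \<times> 'a cterm \<Rightarrow> int) set \<Rightarrow> ('a \<times> 'a cterm \<Rightarrow> int) set" where
  "contraction0 X = cls (-1) (unit_gen (- eval0_cls X))"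

lemma rhom_contraction0: "rhom (T 0) (T (-1)) contraction0"
  unfolding rhom_def
proof (intro conjI ballI allI)
  fix X assume X0: "X \<in> carr (T 0)"
  have X: "- eval0_cls X \<in> right_ideal u"
    by (rule right_ideal_uminus[OF eval0_cls_in_right_ideal[OF X0]])
  show "contraction0 X \<in> carr (T (-1))"
    unfolding contraction0_def T_carr by (rule imageI, rule unit_gen_in_FT[OF X])
  fix a
  have "ract (T (-1)) (cls (-1) (unit_gen (- eval0_cls X))) a = cls (-1) (unit_gen (- eval0_cls X * a))"
    using C_m1_ract[OF free_ab_delta[OF idem_in_left_ideal X], of a] by (simp add: T_ract)
  then show "contraction0 (ract (T 0) X a) = ract (T (-1)) (contraction0 X) a"
    by (simp add: contraction0_def eval0_cls_ract[OF X0])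
next
  fix X Y assume X: "X \<in> carr (T 0)" and Y: "Y \<in> carr (T 0)"
  have XY: "- eval0_cls X \<in> right_ideal u" "- eval0_cls Y \<in> right_ideal u"
    by (rule right_ideal_uminus eval0_cls_in_right_ideal X Y)+
  have "unit_gen (- eval0_cls X + - eval0_cls Y) - unit_gen (- eval0_cls X) - unit_gen (- eval0_cls Y)
      \<in> Z (-1)"
    using unit_gen_additive_mod XY unfolding additive_mod_def by blast
  then have "unit_gen (- (eval0_cls X + eval0_cls Y)) - (unit_gen (- eval0_cls X) + unit_gen (- eval0_cls Y))
      \<in> Z (-1)"
    by (simp add: diff_diff_eq)
  then show "contraction0 (add (T 0) X Y) = add (T (-1)) (contraction0 X) (contraction0 Y)"
    by (simp add: contraction0_def eval0_cls_add[OF X Y, unfolded T_add] T_add setadd_coset coset_eqI)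
qed

lemma contraction_deg0:
  assumes "X \<in> carr (T 0)"
  shows "setadd X (dT (-1) (contraction0 X)) = Z 0"
proof -
  obtain f where f: "f \<in> FT 0" "X = cls 0 f"
    using assms by (rule T_elem)
  have e: "eval0 f \<in> right_ideal u"
    using f(1) by (rule eval0_in_right_ideal)
  have "f + delta u (Inr (- eval0 f)) \<in> Z 0"
  proof (rule eval0_eq_zero_imp_in_Z)
    show "f + delta u (Inr (- eval0 f)) \<in> FT 0"
      using free_ab_add[OF f(1) free_ab_delta[OF idem_in_right_ideal]] by (simp add: C_0_simps)
    show "eval0 (f + delta u (Inr (- eval0 f))) = 0"
      using fin_supp_free_ab[OF f(1)] idem_mult_right_ideal[OF e] by (simp add: eval0_add)
  qed
  then show ?thesis
    using dT_unit_gen[OF right_ideal_uminus[OF e]] fin_supp_free_ab[OF f(1)]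
    by (simp add: f(2) contraction0_def eval0_cls_cls setadd_coset coset_eq_zspan)
qed

lemma contraction_deg_m1:
  assumes "X \<in> carr (T (-1))"
  shows "setadd X (contraction0 (dT (-1) X)) = Z (-1)"
proof -
  obtain f where f: "f \<in> FT (-1)" "X = cls (-1) f"
    using assms by (rule T_elem)
  have e: "- eval1 f \<in> right_ideal u"
    using f(1) by (intro right_ideal_uminus eval1_in_right_ideal)
  have "f + unit_gen (- eval1 f) \<in> Z (-1)"
  proof (rule eval1_eq_zero_imp_in_Z)
    show "f + unit_gen (- eval1 f) \<in> FT (-1)"
      by (rule free_ab_add[OF f(1) unit_gen_in_FT[OF e]])
    show "eval1 (f + unit_gen (- eval1 f)) = 0"
      using fin_supp_free_ab[OF f(1)] eval1_unit_gen[OF e] by (simp add: eval1_add)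
  qed
  then show ?thesis
    using free_ab_d_gen[OF f(1)] fin_supp_free_ab[OF f(1)]
    by (simp add: f(2) dT_cls[OF f(1)] contraction0_def eval0_cls_cls fin_supp_pushf eval0_d_gen
        setadd_coset coset_eq_zspan)
qed

definition contraction :: "int \<Rightarrow> ('a \<times> 'a cterm \<Rightarrow> int) set \<Rightarrow> ('a \<times> 'a cterm \<Rightarrow> int) set" where
  "contraction n = (if n = 0 then contraction0 else (\<lambda>_. Z (n - 1)))"

lemma rhom_contraction: "rhom (T n) (T (n - 1)) (contraction n)"
  using rhom_contraction0 rhom_const_zer[OF zer_neutral_T, unfolded T_zer]
  by (cases "n = 0") (simp_all add: contraction_def)

lemma contraction_homotopy:
  assumes X: "X \<in> carr (T n)"
  shows "zer (T n)
    = add (T n) X (add (T n) (dT (n - 1) (contraction n X)) (contraction (n + 1) (dT n X)))"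
proof -
  consider "n = 0" | "n = -1" | "n \<noteq> 0" "n \<noteq> -1" by blast
  then show ?thesis
  proof cases
    case 1
    have "contraction0 X \<in> carr (T (-1))"
      using rhom_contraction0 X 1 by (simp add: rhom_def)
    then have "setadd (dT (-1) (contraction0 X)) (Z 0) = dT (-1) (contraction0 X)"
      using dT_carr zer_neutral_T[of 0] by (fastforce simp: zer_neutral_def T_zer T_add)
    then show ?thesis
      using contraction_deg0 X 1 by (simp add: contraction_def T_zer T_add)
  next
    case 2
    have "setadd (Z (-1)) (contraction0 Y) = contraction0 Y" for Y
      using setadd_coset[of "proj_rels u (C (-1))" 0] by (simp add: contraction0_def coset_zero)
    then show ?thesis
      using contraction_deg_m1 X 2 dT_zer[of "-2"] by (simp add: contraction_def T_zer T_add)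
  next
    case 3
    then show ?thesis
      using X T_other[of n] dT_zer[of "n - 1"] dT_zer[of n]
      by (simp add: contraction_def T_zer T_add setadd_zspan)
  qed
qed

lemma htpy_equiv_zero_cx_diagonal: "htpy_equiv T dT (zero_cx :: int \<Rightarrow> (unit, 'a) rmod) zero_cx_d"
proof (rule htpy_equiv_zero_cxI[OF zer_neutral_T])
  show "dT n (zer (T n)) = zer (T (n + 1))" for n
    by (simp add: T_zer dT_zer)
  show "homotopic T dT T dT (\<lambda>n _. zer (T n)) (\<lambda>n x. x)"
    unfolding homotopic_def
    by (intro exI[of _ contraction] conjI allI ballI rhom_contraction contraction_homotopy)
qed

end

theorem lemma2p6:
  fixes smult :: "'k::field \<Rightarrow> 'a::ring_1 \<Rightarrow> 'a"
    and e :: "nat \<Rightarrow> 'a" and n i j :: nat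
  assumes "fd_algebra smult"
    and "complete_prim_orth_idems e n"
    and "triangular smult e n"
    and "1 \<le> i" and "i \<le> j" and "j \<le> n"
  shows "(j = i \<longrightarrow>
            htpy_equiv (RiA smult (e i) (proj_mod (e j))) (RiA_d smult (e i) (proj_mod (e j)))
                       (zero_cx :: int \<Rightarrow> (unit, 'a) rmod) zero_cx_d)
       \<and> (i < j \<longrightarrow>
            htpy_equiv (RiA smult (e i) (proj_mod (e j))) (RiA_d smult (e i) (proj_mod (e j)))
                       (stalk0 (proj_mod (e j))) stalk0_d)"
proof -
  have i: "i \<in> {1..n}" and j: "j \<in> {1..n}"
    using assms(4-6) by auto
  have idem: "e i * e i = e i"
    using assms(2) i by (auto simp: complete_prim_orth_idems_def primitive_idem_def idem_def)
  have smult_mult: "\<forall>c a b. smult c (a * b) = smult c a * b \<and> smult c (a * b) = a * smult c b"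
    using assms(1) unfolding fd_algebra_def by blast
  show ?thesis
  proof (intro conjI impI)
    assume "j = i"
    interpret Ci_tensor_diagonal smult "e i"
      by unfold_locales (fact idem, fact smult_mult, use assms(3) i in \<open>simp add: triangular_def\<close>)
    from htpy_equiv_zero_cx_diagonal \<open>j = i\<close>
    show "htpy_equiv (RiA smult (e i) (proj_mod (e j))) (RiA_d smult (e i) (proj_mod (e j)))
        (zero_cx :: int \<Rightarrow> (unit, 'a) rmod) zero_cx_d"
      by (simp only:)
  next
    assume "i < j"
    interpret Ci_tensor smult "e i" "e j"
      using idem smult_mult by unfold_locales
    have "\<And>a. e j * a * e i = 0"
      using assms(3) i j \<open>i < j\<close> by (simp add: triangular_def)
    then show "htpy_equiv T dT (stalk0 P) stalk0_d"
      by (rule htpy_equiv_stalk0_if_orthogonal)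
  qed
qed

end
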